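(* Let $[f_{ij}]$ be a $p\times t$ matrix with entries $f_{ij}\in k[x,y]$, and let $D\subset k\times k$ be an infinite set. For $l\in\{0,1,\dots,p\}$, $(\lambda,\mu)\in D$ and $\mathcal F_l=\{m,n,F,G,N_1,\dots,N_l\}$, where $m,n\ge1$, $F\in k^{m\times m}$ and $G\in k^{n\times n}$ are nilpotent upper triangular matrices and $N_1,\dots,N_l\in k^{m\times n}$, let $\mathcal S_l(\lambda,\mu,\mathcal F_l)$ be the system of matrix equations $$X_1^{f_{i1}}+\dots+X_t^{f_{it}}=N_i,\qquad i=1,\dots,l,$$ in unknowns $X_1,\dots,X_t\in k^{m\times n}$ (empty if $l=0$), where $X^f=\sum a_{ij}L^iXR^j$ for $f=\sum a_{ij}x^iy^j$, with $L=\lambda I_m+F$, $R=\mu I_n+G$. Suppose that for every $(\lambda,\mu)\in D$ there exists $\mathcal F_p$ such that $\mathcal S_p(\lambda,\mu,\mathcal F_p)$ is unsolvable. Then there exist an infinite set $D'\subset D$, a polynomial $d\in k[x,y]$ vanishing on $D'$, an integer $w$ with $0\le w\le\min(p-1,t)$, and pairwise distinct $j_1,\dots,j_{t-w}\in\{1,\dots,t\}$ such that: (i) for every $(\lambda,\mu)\in D'$ and every $\mathcal F_w$, the system $\mathcal S_w(\lambda,\mu,\mathcal F_w)$ is solvable, and every $(t-w)$-tuple $S_{j_1},\dots,S_{j_{t-w}}\in k^{m\times n}$ extends uniquely to a solution $(S_1,\dots,S_t)$ of it; (ii) for every $(\lambda,\mu)\in D'$, every $\mathcal F^0_w=\{m,n,F,G,0,\dots,0\}$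 and every solution $(S_1,\dots,S_t)$ of $\mathcal S_w(\lambda,\mu,\mathcal F^0_w)$, there exists a matrix $S\in k^{m\times n}$ such that $S_1^{f_{w+1,1}}+\dots+S_t^{f_{w+1,t}}=S^d$.
   Context: $k$ is an algebraically closed field. For $L=\lambda I_m+F$, $R=\mu I_n+G$ as in the claim, $A\in k^{m\times n}$ and $f=\sum_{i,j\ge0}a_{ij}x^iy^j\in k[x,y]$, the notation $A^f$ means $\sum_{i,j}a_{ij}L^iAR^j$. *)

theory Defs
  imports "Jordan_Normal_Form.Matrix" "HOL-Computational_Algebra.Polynomial"
begin

text \<open>Bivariate polynomials f in k[x,y] are represented as elements of type 'a poly poly:
  the outer variable is y and the inner variable is x, i.e.
  f = sum_{i,j} a_ij x^i y^j with a_ij = coeff (coeff f j) i.\<close>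

definition eval2 :: "'a::comm_ring_1 poly poly \<Rightarrow> 'a \<Rightarrow> 'a \<Rightarrow> 'a" where
  "eval2 f a b = poly (map_poly (\<lambda>q. poly q a) f) b"

definition polyapp :: "'a::comm_ring_1 mat \<Rightarrow> 'a mat \<Rightarrow> 'a poly poly \<Rightarrow> 'a mat \<Rightarrow> 'a mat" where
  "polyapp L R f A = mat (dim_row A) (dim_col A)
     (\<lambda>rc. \<Sum>j\<le>degree f. \<Sum>i\<le>degree (coeff f j).
        coeff (coeff f j) i * ((L ^\<^sub>m i) * A * (R ^\<^sub>m j)) $$ rc)"

definition nilpotent_mat :: "'a::comm_ring_1 mat \<Rightarrow> bool" where
  "nilpotent_mat A \<longleftrightarrow> (\<exists>k. A ^\<^sub>m k = 0\<^sub>m (dim_row A) (dim_col A))"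

definition admissible :: "nat \<Rightarrow> nat \<Rightarrow> 'a::comm_ring_1 mat \<Rightarrow> 'a mat \<Rightarrow> bool" where
  "admissible m n F G \<longleftrightarrow> m \<ge> 1 \<and> n \<ge> 1 \<and> F \<in> carrier_mat m m \<and> G \<in> carrier_mat n n
     \<and> upper_triangular F \<and> upper_triangular G \<and> nilpotent_mat F \<and> nilpotent_mat G"

definition sys_lhs :: "(nat \<Rightarrow> nat \<Rightarrow> 'a::comm_ring_1 poly poly) \<Rightarrow> nat \<Rightarrow> nat \<Rightarrow>
    'a \<Rightarrow> 'a \<Rightarrow> nat \<Rightarrow> nat \<Rightarrow> 'a mat \<Rightarrow> 'a mat \<Rightarrow> (nat \<Rightarrow> 'a mat) \<Rightarrow> 'a mat" where
  "sys_lhs fs t i lam mu m n F G X = mat m n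
     (\<lambda>rc. \<Sum>j\<in>{1..t}. polyapp (lam \<cdot>\<^sub>m 1\<^sub>m m + F) (mu \<cdot>\<^sub>m 1\<^sub>m n + G) (fs i j) (X j) $$ rc)"

definition is_solution :: "(nat \<Rightarrow> nat \<Rightarrow> 'a::comm_ring_1 poly poly) \<Rightarrow> nat \<Rightarrow> nat \<Rightarrow>
    'a \<Rightarrow> 'a \<Rightarrow> nat \<Rightarrow> nat \<Rightarrow> 'a mat \<Rightarrow> 'a mat \<Rightarrow> (nat \<Rightarrow> 'a mat) \<Rightarrow> (nat \<Rightarrow> 'a mat) \<Rightarrow> bool" where
  "is_solution fs t l lam mu m n F G N X \<longleftrightarrow>
     (\<forall>j\<in>{1..t}. X j \<in> carrier_mat m n) \<and>
     (\<forall>i\<in>{1..l}. sys_lhs fs t i lam mu m n F G X = N i)"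

definition solvable :: "(nat \<Rightarrow> nat \<Rightarrow> 'a::comm_ring_1 poly poly) \<Rightarrow> nat \<Rightarrow> nat \<Rightarrow>
    'a \<Rightarrow> 'a \<Rightarrow> nat \<Rightarrow> nat \<Rightarrow> 'a mat \<Rightarrow> 'a mat \<Rightarrow> (nat \<Rightarrow> 'a mat) \<Rightarrow> bool" where
  "solvable fs t l lam mu m n F G N \<longleftrightarrow> (\<exists>X. is_solution fs t l lam mu m n F G N X)"

end

theory Submission
  imports Defs "Jordan_Normal_Form.Char_Poly" "HOL-Computational_Algebra.Field_as_Ring"
begin

text \<open>
  The operators A \<mapsto> A^f on m x n matrices commute, and A \<mapsto> A^D is invertible
  whenever D(lam, mu) is nonzero, since x - lam and y - mu act nilpotently. Hence Cramer's rule
  applies to the systems S_l: if the minor Delta of the coefficient matrix formed by the first w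
  rows and some w columns cs does not vanish at (lam, mu), then S_w is solvable and its solutions
  are parametrized by the unknowns outside cs.

  Unsolvability of S_p gives every point of D some w < p at which the first w rows have a
  nonvanishing minor but the first w + 1 rows have none; by pigeonhole one pair (w, cs) serves an
  infinite D1 \<subseteq> D, and all minors of size w + 1 bordering Delta vanish on D1. As two
  coprime bivariate polynomials have only finitely many common zeros, these bordered minors share
  a factor d vanishing on an infinite D' \<subseteq> D1. Expanding the bordered minors along their last
  column yields a combination of the first w + 1 equations, with coefficient Delta on the last one,
  whose left-hand side is A \<mapsto> A^d applied to a combination of the unknowns; on solutions of the
  homogeneous system S_w this gives (ii).
\<close>

section \<open>Evaluation of bivariate polynomials\<close>

lemma eval2_eq_poly_poly: "eval2 f a b = poly (poly f [:b:]) a"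
  unfolding eval2_def by (induction f) (simp_all add: map_poly_pCons)

interpretation eval2_hom: comm_ring_hom "\<lambda>f. eval2 f a b" for a b
  by unfold_locales (simp_all add: eval2_eq_poly_poly)

declare eval2_hom.hom_add [simp] eval2_hom.hom_mult [simp]

lemma eval2_const [simp]: "eval2 [:c:] a b = poly c a"
  by (simp add: eval2_eq_poly_poly)

lemma eval2_smult [simp]: "eval2 (smult c f) a b = poly c a * eval2 f a b"
  by (simp add: eval2_eq_poly_poly)

lemma (in comm_ring_hom) eval2_map_poly_hom:
  "eval2 (map_poly (map_poly hom) f) (hom a) (hom b) = hom (eval2 f a b)"
proof -
  interpret inner: map_poly_comm_ring_hom hom ..
  have "map_poly hom [:b:] = [:hom b:]"
    by (simp add: map_poly_pCons_hom)
  then have "poly (map_poly (map_poly hom) f) [:hom b:] = map_poly hom (poly f [:b:])"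
    using inner.poly_map_poly[of f "[:b:]"] by simp
  then show ?thesis by (simp only: eval2_eq_poly_poly poly_map_poly)
qed

section \<open>Common zeros and common divisors\<close>

lemma x_minus_dvd_if_infinitely_many_zeros:
  fixes a :: "'a::field poly poly"
  assumes "infinite {y. eval2 a l y = 0}"
  shows "[:[:-l, 1:]:] dvd a"
proof -
  have "map_poly (\<lambda>q. poly q l) a = 0"
    using assms poly_roots_finite[of "map_poly (\<lambda>q. poly q l) a"] unfolding eval2_def by auto
  then have "poly (coeff a j) l = 0" for j
    by (metis coeff_0 coeff_map_poly poly_0)
  then have dvd_coeff: "[:-l, 1:] dvd coeff a j" for j
    using poly_eq_0_iff_dvd by blast
  have "coeff (smult [:-l, 1:] (map_poly (\<lambda>q. q div [:-l, 1:]) a)) j = coeff a j" for j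
  proof -
    have "coeff (smult [:-l, 1:] (map_poly (\<lambda>q. q div [:-l, 1:]) a)) j
        = [:-l, 1:] * (coeff a j div [:-l, 1:])"
      by (subst coeff_smult, subst coeff_map_poly) simp_all
    also have "\<dots> = coeff a j" by (rule dvd_mult_div_cancel[OF dvd_coeff])
    finally show ?thesis .
  qed
  then have "a = [:[:-l, 1:]:] * map_poly (\<lambda>q. q div [:-l, 1:]) a"
    by (simp add: poly_eq_iff)
  then show ?thesis by (metis dvd_triv_left)
qed

definition common_zeros :: "'a::comm_ring_1 poly poly \<Rightarrow> 'a poly poly \<Rightarrow> ('a \<times> 'a) set" where
  "common_zeros a b = {(x, y). eval2 a x y = 0 \<and> eval2 b x y = 0}"

lemma finite_common_zeros_on_lines:
  fixes a b :: "'a::field_gcd poly poly"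
  assumes "coprime a b" and "finite X"
  shows "finite (common_zeros a b \<inter> {(x, y). x \<in> X})"
proof -
  have "finite {y. (x, y) \<in> common_zeros a b}" for x
  proof (rule ccontr)
    assume inf: "infinite {y. (x, y) \<in> common_zeros a b}"
    have "[:[:-x, 1:]:] dvd a" "[:[:-x, 1:]:] dvd b"
      by (rule x_minus_dvd_if_infinitely_many_zeros, rule infinite_super[OF _ inf],
          auto simp: common_zeros_def)+
    with \<open>coprime a b\<close> have "is_unit [:[:-x, 1:]:]"
      by (rule coprime_common_divisor)
    then show False by (simp add: is_unit_poly_iff)
  qed
  then have "finite (\<Union>x\<in>X. Pair x ` {y. (x, y) \<in> common_zeros a b})"
    using \<open>finite X\<close> by blast
  then show ?thesis by (rule finite_subset[rotated]) auto
qed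

text \<open>One step of the Euclidean algorithm in y: pseudo-division of a by b, followed by removal
  of the gcd of b and the remainder, lowers the sum of the y-degrees; the factor c introduced by
  the pseudo-division only contributes the finitely many lines x = x0 with c(x0) = 0.\<close>

lemma common_zeros_pseudo_mod_step:
  fixes a b :: "'a::field_gcd poly poly"
  assumes cp: "coprime a b" and le: "degree b \<le> degree a" and degb: "degree b \<noteq> 0"
  obtains c b' r' where "c \<noteq> 0" "coprime b' r'" "degree b' + degree r' < degree a + degree b"
    "common_zeros a b \<subseteq> {(x, y). poly c x = 0} \<union> common_zeros b' r'"
proof -
  have bnz: "b \<noteq> 0" using degb by auto
  obtain c q where c: "c \<noteq> 0" "smult c a = b * q + pseudo_mod a b"
    using pseudo_mod(1)[OF bnz, of a] by blast
  define r where "r = pseudo_mod a b"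
  have rdeg: "r = 0 \<or> degree r < degree b" using pseudo_mod(2)[OF bnz, of a] r_def by simp
  define g where "g = gcd b r"
  have gnz: "g \<noteq> 0" using bnz by (simp add: g_def)
  obtain b' r' where bb: "b = b' * g" and rr: "r = r' * g" and cp': "coprime b' r'"
    using gcd_coprime_exists[of b r] gnz unfolding g_def by blast
  have "degree b' \<le> degree b" using bb bnz gnz by (simp add: degree_mult_eq)
  moreover have "degree r' < degree b"
    using rr gnz degb rdeg by (cases "r = 0") (auto simp: degree_mult_eq)
  ultimately have deg: "degree b' + degree r' < degree a + degree b" using le by simp
  have "g dvd smult c a" using c(2) by (simp add: g_def r_def)
  moreover have "smult c a = [:c:] * a" by simp
  ultimately have "g dvd [:c:] * a" by (simp only:)
  moreover have "coprime g a" using cp bb by (simp add: coprime_commute)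
  ultimately have gdvd: "g dvd [:c:]"
    using coprime_dvd_mult_left_iff by blast
  have "(x, y) \<in> common_zeros b' r'" if xy: "(x, y) \<in> common_zeros a b" and "poly c x \<noteq> 0" for x y
  proof -
    have "eval2 (smult c a) x y = eval2 (b * q + r) x y" using c(2) r_def by simp
    with xy have "eval2 r x y = 0" by (simp add: common_zeros_def)
    moreover have "eval2 g x y \<noteq> 0"
      using eval2_hom.hom_dvd[OF gdvd, of x y] \<open>poly c x \<noteq> 0\<close> by auto
    ultimately show ?thesis using xy bb rr by (auto simp: common_zeros_def)
  qed
  then have "common_zeros a b \<subseteq> {(x, y). poly c x = 0} \<union> common_zeros b' r'"
    by auto
  with c(1) cp' deg show ?thesis by (rule that)
qed

lemma finite_common_zeros_if_coprime:
  fixes a b :: "'a::field_gcd poly poly"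
  assumes "coprime a b"
  shows "finite (common_zeros a b)"
  using assms
proof (induction "degree a + degree b" arbitrary: a b rule: less_induct)
  case less
  have reduce: "finite (common_zeros a b)" if cp: "coprime a b" and le: "degree b \<le> degree a"
    and IH: "\<And>a' b' :: 'a poly poly. degree a' + degree b' < degree a + degree b \<Longrightarrow> coprime a' b' \<Longrightarrow>
      finite (common_zeros a' b')" for a b :: "'a poly poly"
  proof (cases "degree b = 0")
    case True
    then obtain c where bc: "b = [:c:]" by (metis degree_eq_zeroE)
    show ?thesis
    proof (cases "c = 0")
      case True
      then have "is_unit a" using cp bc by simp
      then have "eval2 a x y \<noteq> 0" for x y
        using eval2_hom.hom_dvd_1[OF \<open>is_unit a\<close>] by (auto simp: dvd_field_iff)
      then show ?thesis by (simp add: common_zeros_def)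
    next
      case False
      have "common_zeros a b = common_zeros a b \<inter> {(x, y). x \<in> {x. poly c x = 0}}"
        by (auto simp: common_zeros_def bc)
      then show ?thesis
        using finite_common_zeros_on_lines[OF cp poly_roots_finite[OF False]] by simp
    qed
  next
    case False
    then obtain c b' r' where "c \<noteq> 0" and cp': "coprime b' r'"
      and deg: "degree b' + degree r' < degree a + degree b"
      and sub: "common_zeros a b \<subseteq> {(x, y). poly c x = 0} \<union> common_zeros b' r'"
      using common_zeros_pseudo_mod_step[OF cp le] by blast
    have "finite (common_zeros b' r')" using IH[OF deg cp'] .
    moreover have "finite (common_zeros a b \<inter> {(x, y). x \<in> {x. poly c x = 0}})"
      using finite_common_zeros_on_lines[OF cp poly_roots_finite[OF \<open>c \<noteq> 0\<close>]] .
    ultimately show ?thesis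
      using sub by (auto intro: finite_subset[of _
          "(common_zeros a b \<inter> {(x, y). x \<in> {x. poly c x = 0}}) \<union> common_zeros b' r'"])
  qed
  have "common_zeros a b = common_zeros b a" by (auto simp: common_zeros_def)
  then show ?case
    using reduce[of a b] reduce[of b a] less by (metis add.commute coprime_commute nat_le_linear)
qed

lemma common_divisor_vanishing_infinitely_gcd:
  fixes g :: "'i \<Rightarrow> 'a::field_gcd poly poly"
  assumes "finite J" "infinite S" "\<forall>j\<in>J. \<forall>(x, y)\<in>S. eval2 (g j) x y = 0"
  shows "\<exists>d. (\<forall>j\<in>J. d dvd g j) \<and> infinite {(x, y)\<in>S. eval2 d x y = 0}"
  using assms(1,3)
proof (induction J rule: finite_induct)
  case empty
  then show ?case using assms(2) by (intro exI[of _ 0]) simp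
next
  case (insert j J)
  then obtain d0 where d0: "\<forall>i\<in>J. d0 dvd g i" "infinite {(x, y)\<in>S. eval2 d0 x y = 0}"
    by blast
  show ?case
  proof (cases "d0 = 0 \<and> g j = 0")
    case True
    then show ?thesis using d0 by (intro exI[of _ 0]) auto
  next
    case False
    define d where "d = gcd d0 (g j)"
    obtain a b where ab: "d0 = a * d" "g j = b * d" "coprime a b"
      using gcd_coprime_exists[of d0 "g j"] False unfolding d_def by auto
    have "{(x, y)\<in>S. eval2 d0 x y = 0} - common_zeros a b \<subseteq> {(x, y)\<in>S. eval2 d x y = 0}"
      using insert.prems ab by (auto simp: common_zeros_def)
    moreover have "infinite ({(x, y)\<in>S. eval2 d0 x y = 0} - common_zeros a b)"
      using d0(2) finite_common_zeros_if_coprime[OF ab(3)] by (rule Diff_infinite_finite[rotated])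
    ultimately have "infinite {(x, y)\<in>S. eval2 d x y = 0}" by (rule infinite_super)
    moreover have "\<forall>i\<in>insert j J. d dvd g i"
      using d0(1) by (auto simp: d_def intro: dvd_trans[OF gcd_dvd1])
    ultimately show ?thesis by blast
  qed
qed

text \<open>The library's gcd on bivariate polynomials requires coefficients of class field_gcd. An
  arbitrary field is therefore copied into a new type carrying the trivial Euclidean structure, and
  the result above is transported back along the isomorphism.\<close>

typedef 'a gcd_field = "UNIV :: 'a set" ..

setup_lifting type_definition_gcd_field

instantiation gcd_field :: (field) field
begin
lift_definition zero_gcd_field :: "'a gcd_field" is 0 .
lift_definition one_gcd_field :: "'a gcd_field" is 1 .
lift_definition plus_gcd_field :: "'a gcd_field \<Rightarrow> 'a gcd_field \<Rightarrow> 'a gcd_field" is "(+)" .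
lift_definition minus_gcd_field :: "'a gcd_field \<Rightarrow> 'a gcd_field \<Rightarrow> 'a gcd_field" is "(-)" .
lift_definition uminus_gcd_field :: "'a gcd_field \<Rightarrow> 'a gcd_field" is uminus .
lift_definition times_gcd_field :: "'a gcd_field \<Rightarrow> 'a gcd_field \<Rightarrow> 'a gcd_field" is "(*)" .
lift_definition inverse_gcd_field :: "'a gcd_field \<Rightarrow> 'a gcd_field" is inverse .
lift_definition divide_gcd_field :: "'a gcd_field \<Rightarrow> 'a gcd_field \<Rightarrow> 'a gcd_field" is "(/)" .
instance by standard (transfer; simp add: algebra_simps divide_inverse)+
end

instantiation gcd_field :: (field)
  "{unique_euclidean_ring, normalization_euclidean_semiring, normalization_semidom_multiplicative}"
begin
definition [simp]: "normalize_gcd_field = (normalize_field :: 'a gcd_field \<Rightarrow> _)"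
definition [simp]: "unit_factor_gcd_field = (unit_factor_field :: 'a gcd_field \<Rightarrow> _)"
definition [simp]: "modulo_gcd_field = (mod_field :: 'a gcd_field \<Rightarrow> _)"
definition [simp]: "euclidean_size_gcd_field = (euclidean_size_field :: 'a gcd_field \<Rightarrow> _)"
definition [simp]: "division_segment (x :: 'a gcd_field) = 1"
instance
  by standard (simp_all add: dvd_field_iff field_split_simps split: if_splits)
end

instantiation gcd_field :: (field) euclidean_ring_gcd
begin
definition "gcd_gcd_field = (Euclidean_Algorithm.gcd :: 'a gcd_field \<Rightarrow> _)"
definition "lcm_gcd_field = (Euclidean_Algorithm.lcm :: 'a gcd_field \<Rightarrow> _)"
definition "Gcd_gcd_field = (Euclidean_Algorithm.Gcd :: 'a gcd_field set \<Rightarrow> _)"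
definition "Lcm_gcd_field = (Euclidean_Algorithm.Lcm :: 'a gcd_field set \<Rightarrow> _)"
instance
  by standard
    (simp_all add: gcd_gcd_field_def lcm_gcd_field_def Gcd_gcd_field_def Lcm_gcd_field_def)
end

instance gcd_field :: (field) field_gcd ..

interpretation Rep_gcd_field: comm_ring_hom Rep_gcd_field
  by unfold_locales (simp_all add: zero_gcd_field.rep_eq one_gcd_field.rep_eq
      plus_gcd_field.rep_eq times_gcd_field.rep_eq)

interpretation Abs_gcd_field: comm_ring_hom Abs_gcd_field
  by unfold_locales (simp_all add: zero_gcd_field_def one_gcd_field_def
      plus_gcd_field_def times_gcd_field_def Abs_gcd_field_inverse)

lemma common_divisor_vanishing_infinitely:
  fixes g :: "'i \<Rightarrow> 'a::field poly poly"
  assumes "finite J" "infinite S" "\<forall>j\<in>J. \<forall>(x, y)\<in>S. eval2 (g j) x y = 0"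
  shows "\<exists>d. (\<forall>j\<in>J. d dvd g j) \<and> infinite {(x, y)\<in>S. eval2 d x y = 0}"
proof -
  let ?to = "map_poly (map_poly Abs_gcd_field)" and ?from = "map_poly (map_poly Rep_gcd_field)"
  let ?pt = "map_prod Abs_gcd_field Abs_gcd_field"
  have from_to: "?from (?to f) = f" for f
    by (simp add: map_poly_map_poly o_def Abs_gcd_field_inverse)
  have inj_pt: "inj ?pt"
    by (simp add: map_prod_inj_on inj_def Abs_gcd_field_inject)
  have vanish: "\<forall>j\<in>J. \<forall>(x, y)\<in>?pt ` S. eval2 (?to (g j)) x y = 0"
  proof (intro ballI, clarify)
    fix j x y assume "j \<in> J" "(x, y) \<in> S"
    then have "eval2 (g j) x y = 0" using assms(3) by blast
    then show "eval2 (?to (g j)) (Abs_gcd_field x) (Abs_gcd_field y) = 0"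
      by (simp add: Abs_gcd_field.eval2_map_poly_hom)
  qed
  have "infinite (?pt ` S)"
    using assms(2) finite_imageD[of ?pt S] inj_pt by (blast intro: inj_on_subset)
  then obtain d where d: "\<forall>j\<in>J. d dvd ?to (g j)" "infinite {(x, y)\<in>?pt ` S. eval2 d x y = 0}"
    using common_divisor_vanishing_infinitely_gcd[OF assms(1) _ vanish] by blast
  interpret from_coeffs: map_poly_comm_ring_hom Rep_gcd_field ..
  interpret from_polys: map_poly_comm_ring_hom "map_poly Rep_gcd_field" ..
  have "\<forall>j\<in>J. ?from d dvd g j"
    using d(1) from_polys.hom_dvd from_to by metis
  moreover have "{(x, y)\<in>?pt ` S. eval2 d x y = 0} \<subseteq> ?pt ` {(x, y)\<in>S. eval2 (?from d) x y = 0}"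
  proof clarify
    fix x y assume "(x, y) \<in> S" and zero: "eval2 d (Abs_gcd_field x) (Abs_gcd_field y) = 0"
    have "eval2 (?from d) x y = Rep_gcd_field (eval2 d (Abs_gcd_field x) (Abs_gcd_field y))"
      using Rep_gcd_field.eval2_map_poly_hom[of d "Abs_gcd_field x" "Abs_gcd_field y"]
      by (simp add: Abs_gcd_field_inverse)
    with zero \<open>(x, y) \<in> S\<close>
    show "(Abs_gcd_field x, Abs_gcd_field y) \<in> ?pt ` {(x, y)\<in>S. eval2 (?from d) x y = 0}"
      by (auto intro!: image_eqI[of _ _ "(x, y)"])
  qed
  then have "infinite {(x, y)\<in>S. eval2 (?from d) x y = 0}"
    using d(2) finite_imageI finite_subset by blast
  ultimately show ?thesis by blast
qed

section \<open>The action of bivariate polynomials on matrices\<close>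

definition coeff2 :: "'a::comm_ring_1 poly poly \<Rightarrow> nat \<Rightarrow> nat \<Rightarrow> 'a" where
  "coeff2 f i j = coeff (coeff f j) i"

definition bidegree_le :: "'a::comm_ring_1 poly poly \<Rightarrow> nat \<Rightarrow> nat \<Rightarrow> bool" where
  "bidegree_le f a b \<longleftrightarrow> degree f \<le> b \<and> (\<forall>j. degree (coeff f j) \<le> a)"

lemma bidegree_le_mono: "bidegree_le f a b \<Longrightarrow> a \<le> a' \<Longrightarrow> b \<le> b' \<Longrightarrow> bidegree_le f a' b'"
  unfolding bidegree_le_def by (meson order.trans)

lemma bidegree_le_exists: "\<exists>K. bidegree_le f K K"
proof -
  define K where "K = degree f + (\<Sum>j\<le>degree f. degree (coeff f j))"
  have "degree (coeff f j) \<le> K" for j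
  proof (cases "j \<le> degree f")
    case True
    have "degree (coeff f j) \<le> (\<Sum>j\<le>degree f. degree (coeff f j))"
      by (rule member_le_sum) (use True in auto)
    then show ?thesis unfolding K_def by simp
  qed (simp add: coeff_eq_0)
  then have "bidegree_le f K K"
    unfolding bidegree_le_def K_def by simp
  then show ?thesis ..
qed

lemma coeff2_add: "coeff2 (f + g) i j = coeff2 f i j + coeff2 g i j" by (simp add: coeff2_def)

lemma coeff2_smult_const: "coeff2 (smult [:c:] g) i j = c * coeff2 g i j" by (simp add: coeff2_def)

lemma coeff2_pCons_zero: "coeff2 (pCons 0 f) i j = (if j = 0 then 0 else coeff2 f i (j - 1))"
  by (cases j) (simp_all add: coeff2_def)

lemma coeff2_smult_x: "coeff2 (smult [:0,1:] f) i j = (if i = 0 then 0 else coeff2 f (i - 1) j)"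
  by (cases i) (simp_all add: coeff2_def)

lemma coeff2_one: "coeff2 1 i j = (if i = 0 \<and> j = 0 then 1 else 0)"
  by (cases i; cases j) (simp_all add: coeff2_def one_pCons)

lemma bidegree_le_add: "bidegree_le f a b \<Longrightarrow> bidegree_le g a b \<Longrightarrow> bidegree_le (f + g) a b"
  unfolding bidegree_le_def by (metis coeff_add degree_add_le)

lemma bidegree_le_smult_const: "bidegree_le g a b \<Longrightarrow> bidegree_le (smult [:c:] g) a b"
  unfolding bidegree_le_def by (auto intro: order.trans[OF degree_smult_le])

lemma bidegree_le_pCons_zero: "bidegree_le f a b \<Longrightarrow> bidegree_le (pCons 0 f) a (Suc b)"
  unfolding bidegree_le_def by (auto simp: coeff_pCons split: nat.split)

lemma bidegree_le_smult_x: "bidegree_le f a b \<Longrightarrow> bidegree_le (smult [:0, 1:] f) (Suc a) b"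
  unfolding bidegree_le_def
  by (auto intro: order.trans[OF degree_smult_le] simp: degree_pCons_eq_if)

lemma bidegree_le_one: "bidegree_le 1 0 0"
  unfolding bidegree_le_def by (auto simp: coeff_1)

lemma bidegree_le_zero: "bidegree_le 0 0 0"
  unfolding bidegree_le_def by simp

lemma sum_atMost_extend:
  fixes g :: "nat \<Rightarrow> 'b::comm_monoid_add"
  assumes "a \<le> b" "\<And>i. a < i \<Longrightarrow> i \<le> b \<Longrightarrow> g i = 0"
  shows "(\<Sum>i\<le>a. g i) = (\<Sum>i\<le>b. g i)"
  by (rule sum.mono_neutral_left) (use assms in auto)

lemma sum_swap3: "(\<Sum>l\<in>A. \<Sum>j\<in>B. \<Sum>i\<in>C. g i j l) = (\<Sum>j\<in>B. \<Sum>i\<in>C. \<Sum>l\<in>A. g i j l)"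
  by (subst sum.swap) (simp add: sum.swap[of _ A])

lemma index_mult_mat_sum:
  assumes "P \<in> carrier_mat a b" "Q \<in> carrier_mat b c" "r < a" "s < c"
  shows "(P * Q) $$ (r,s) = (\<Sum>k<b. P $$ (r,k) * Q $$ (k,s))"
  using assms by (auto simp: scalar_prod_def lessThan_atLeast0 intro!: sum.cong)

lemma pow_mat_commute:
  assumes "L \<in> carrier_mat n n"
  shows "L ^\<^sub>m i * L = L * L ^\<^sub>m i"
proof (induction i)
  case 0 then show ?case using assms by simp
next
  case (Suc i)
  have "L ^\<^sub>m Suc i * L = (L ^\<^sub>m i * L) * L" by simp
  also have "\<dots> = (L * L ^\<^sub>m i) * L" using Suc by simp
  also have "\<dots> = L * (L ^\<^sub>m i * L)" using assms by (simp add: assoc_mult_mat[of _ n n _ n _ n])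
  finally show ?case by simp
qed

lemma pow_mat_zero_mono: assumes "M \<in> carrier_mat r r" "M ^\<^sub>m k = 0\<^sub>m r r" "k \<le> i"
  shows "M ^\<^sub>m i = 0\<^sub>m r r"
proof -
  obtain d where i: "i = k + d" using assms(3) le_Suc_ex by blast
  have "M ^\<^sub>m (k + d) = 0\<^sub>m r r"
  proof (induction d)
    case 0 then show ?case using assms by simp
  next
    case (Suc d) then show ?case using assms(1) by simp
  qed
  then show ?thesis using i by simp
qed

lemma polyapp_eq_bounded_sum:
  assumes "bidegree_le f a b"
  shows "polyapp L R f A = mat (dim_row A) (dim_col A)
     (\<lambda>rc. \<Sum>j\<le>b. \<Sum>i\<le>a. coeff2 f i j * ((L ^\<^sub>m i) * A * (R ^\<^sub>m j)) $$ rc)"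
  unfolding polyapp_def
proof (rule cong[OF refl, of _ _ "mat _ _"], rule ext)
  fix rc
  have degf: "degree f \<le> b" and degc: "degree (coeff f j) \<le> a" for j
    using assms unfolding bidegree_le_def by auto
  have "(\<Sum>j\<le>degree f. \<Sum>i\<le>degree (coeff f j). coeff (coeff f j) i * (L ^\<^sub>m i * A * R ^\<^sub>m j) $$ rc)
      = (\<Sum>j\<le>degree f. \<Sum>i\<le>a. coeff2 f i j * (L ^\<^sub>m i * A * R ^\<^sub>m j) $$ rc)"
    unfolding coeff2_def
    by (rule sum.cong[OF refl], rule sum_atMost_extend[OF degc]) (auto simp: coeff_eq_0)
  also have "\<dots> = (\<Sum>j\<le>b. \<Sum>i\<le>a. coeff2 f i j * (L ^\<^sub>m i * A * R ^\<^sub>m j) $$ rc)"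
    by (rule sum_atMost_extend[OF degf]) (auto simp: coeff2_def coeff_eq_0)
  finally show "(\<Sum>j\<le>degree f. \<Sum>i\<le>degree (coeff f j).
        coeff (coeff f j) i * (L ^\<^sub>m i * A * R ^\<^sub>m j) $$ rc)
      = (\<Sum>j\<le>b. \<Sum>i\<le>a. coeff2 f i j * (L ^\<^sub>m i * A * R ^\<^sub>m j) $$ rc)" .
qed

lemma dim_polyapp [simp]:
  "dim_row (polyapp L R f A) = dim_row A" "dim_col (polyapp L R f A) = dim_col A"
  unfolding polyapp_def by simp_all

lemma mat_diff_add_cancel:
  "A \<in> carrier_mat m n \<Longrightarrow> C \<in> carrier_mat m n \<Longrightarrow> (A - C) + C = (A :: 'a::ab_group_add mat)"
  by (rule eq_matI) auto

lemma mat_eq_add_imp_diff: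
  "A \<in> carrier_mat m n \<Longrightarrow> B \<in> carrier_mat m n \<Longrightarrow> C \<in> carrier_mat m n \<Longrightarrow>
    A = B + C \<Longrightarrow> B = A - (C :: 'a::ab_group_add mat)"
  by (rule eq_matI) auto

text \<open>Finite sums of m x n matrices, with explicit dimensions so that the empty sum is
  the zero matrix of the right size.\<close>

definition mat_sum :: "nat \<Rightarrow> nat \<Rightarrow> ('b \<Rightarrow> 'a::comm_ring_1 mat) \<Rightarrow> 'b set \<Rightarrow> 'a mat" where
  "mat_sum m n g J = mat m n (\<lambda>rc. \<Sum>j\<in>J. g j $$ rc)"

lemma mat_sum_carrier[simp]: "mat_sum m n g J \<in> carrier_mat m n"
  unfolding mat_sum_def by simp

lemma dim_mat_sum[simp]: "dim_row (mat_sum m n g J) = m" "dim_col (mat_sum m n g J) = n"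
  unfolding mat_sum_def by simp_all

lemma mat_sum_index: "r < m \<Longrightarrow> c < n \<Longrightarrow> mat_sum m n g J $$ (r,c) = (\<Sum>j\<in>J. g j $$ (r,c))"
  unfolding mat_sum_def by simp

lemma mat_sum_empty: "mat_sum m n g {} = 0\<^sub>m m n"
  by (rule eq_matI) (simp_all add: mat_sum_index)

lemma mat_sum_insert: "finite J \<Longrightarrow> j \<notin> J \<Longrightarrow> g j \<in> carrier_mat m n \<Longrightarrow>
  mat_sum m n g (insert j J) = g j + mat_sum m n g J"
  by (rule eq_matI) (auto simp: mat_sum_index)

lemma mat_sum_cong: "(\<And>j. j \<in> J \<Longrightarrow> g j = h j) \<Longrightarrow> mat_sum m n g J = mat_sum m n h J"
  unfolding mat_sum_def by (auto intro!: sum.cong cong[OF refl, of _ _ "mat m n"])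

lemma mat_sum_zero: "(\<And>j. j \<in> J \<Longrightarrow> g j = 0\<^sub>m m n) \<Longrightarrow> mat_sum m n g J = 0\<^sub>m m n"
  by (rule eq_matI) (auto simp: mat_sum_index)

lemma mat_sum_swap:
  "mat_sum m n (\<lambda>a. mat_sum m n (\<lambda>b. g a b) J2) J1
    = mat_sum m n (\<lambda>b. mat_sum m n (\<lambda>a. g a b) J1) J2"
  by (rule eq_matI) (simp_all add: mat_sum_index sum.swap[of _ J1])

lemma mat_sum_reindex: "inj_on h J \<Longrightarrow> mat_sum m n g (h ` J) = mat_sum m n (\<lambda>j. g (h j)) J"
  unfolding mat_sum_def by (simp add: sum.reindex)

lemma mat_sum_union: "finite A \<Longrightarrow> finite B \<Longrightarrow> A \<inter> B = {} \<Longrightarrow>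
  (\<And>j. j \<in> A \<union> B \<Longrightarrow> g j \<in> carrier_mat m n) \<Longrightarrow>
  mat_sum m n g (A \<union> B) = mat_sum m n g A + mat_sum m n g B"
  by (rule eq_matI) (auto simp: mat_sum_index sum.union_disjoint)

lemma mat_sum_delta: "finite J \<Longrightarrow> a \<in> J \<Longrightarrow> A \<in> carrier_mat m n \<Longrightarrow>
  mat_sum m n (\<lambda>j. if j = a then A else 0\<^sub>m m n) J = A"
proof (rule eq_matI)
  fix r c assume "finite J" "a \<in> J" "A \<in> carrier_mat m n" "r < dim_row A" "c < dim_col A"
  then have "(\<Sum>j\<in>J. (if j = a then A else 0\<^sub>m m n) $$ (r,c))
      = (\<Sum>j\<in>J. if j = a then A $$ (r,c) else 0)"
    by (intro sum.cong refl) auto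
  also have "\<dots> = A $$ (r,c)" using \<open>finite J\<close> \<open>a \<in> J\<close> by simp
  finally show "mat_sum m n (\<lambda>j. if j = a then A else 0\<^sub>m m n) J $$ (r, c) = A $$ (r,c)"
    using \<open>r < dim_row A\<close> \<open>c < dim_col A\<close> \<open>A \<in> carrier_mat m n\<close> by (simp add: mat_sum_index)
qed auto

locale polyapp_setting =
  fixes L R :: "'a::comm_ring_1 mat" and m n :: nat
  assumes L: "L \<in> carrier_mat m m" and R: "R \<in> carrier_mat n n"
begin

abbreviation act :: "'a poly poly \<Rightarrow> 'a mat \<Rightarrow> 'a mat" where
  "act f A \<equiv> polyapp L R f A"

definition monomial_act :: "nat \<Rightarrow> nat \<Rightarrow> 'a mat \<Rightarrow> 'a mat" where
  "monomial_act i j A = L ^\<^sub>m i * A * R ^\<^sub>m j"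

lemma monomial_act_carrier: "A \<in> carrier_mat m n \<Longrightarrow> monomial_act i j A \<in> carrier_mat m n"
  unfolding monomial_act_def using L R by auto

lemma act_carrier: "A \<in> carrier_mat m n \<Longrightarrow> act f A \<in> carrier_mat m n"
  unfolding polyapp_def by auto

lemma act_formula:
  assumes "bidegree_le f a b" "A \<in> carrier_mat m n"
  shows "act f A = mat m n (\<lambda>rc. \<Sum>j\<le>b. \<Sum>i\<le>a. coeff2 f i j * monomial_act i j A $$ rc)"
  using polyapp_eq_bounded_sum[OF assms(1), of L R A] assms(2) unfolding monomial_act_def by auto

lemma act_entry:
  assumes "bidegree_le f a b" "A \<in> carrier_mat m n" "r < m" "c < n"
  shows "act f A $$ (r,c) = (\<Sum>j\<le>b. \<Sum>i\<le>a. coeff2 f i j * monomial_act i j A $$ (r,c))"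
  using act_formula[OF assms(1,2)] assms(3,4) by simp

lemma monomial_act_entry:
  assumes "A \<in> carrier_mat m n" "r < m" "c < n"
  shows "monomial_act i j A $$ (r,c)
    = (\<Sum>l<n. (\<Sum>k<m. (L ^\<^sub>m i) $$ (r,k) * A $$ (k,l)) * (R ^\<^sub>m j) $$ (l,c))"
proof -
  have 1: "L ^\<^sub>m i * A \<in> carrier_mat m n" using L assms by auto
  have "monomial_act i j A $$ (r,c) = (\<Sum>l<n. (L ^\<^sub>m i * A) $$ (r,l) * (R ^\<^sub>m j) $$ (l,c))"
    unfolding monomial_act_def by (rule index_mult_mat_sum[OF 1]) (use R assms in auto)
  also have "\<dots> = (\<Sum>l<n. (\<Sum>k<m. (L ^\<^sub>m i) $$ (r,k) * A $$ (k,l)) * (R ^\<^sub>m j) $$ (l,c))"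
    by (rule sum.cong[OF refl], subst index_mult_mat_sum[of _ m m _ n]) (use L assms in auto)
  finally show ?thesis .
qed

lemma monomial_act_add: "A \<in> carrier_mat m n \<Longrightarrow> B \<in> carrier_mat m n \<Longrightarrow> r < m \<Longrightarrow> c < n \<Longrightarrow>
  monomial_act i j (A + B) $$ (r,c) = monomial_act i j A $$ (r,c) + monomial_act i j B $$ (r,c)"
  by (simp add: monomial_act_entry algebra_simps sum.distrib)

lemma monomial_act_smult: "A \<in> carrier_mat m n \<Longrightarrow> r < m \<Longrightarrow> c < n \<Longrightarrow>
  monomial_act i j (x \<cdot>\<^sub>m A) $$ (r,c) = x * monomial_act i j A $$ (r,c)"
  by (simp add: monomial_act_entry algebra_simps sum_distrib_left)

lemma act_add_mat: assumes "A \<in> carrier_mat m n" "B \<in> carrier_mat m n"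
  shows "act f (A + B) = act f A + act f B"
proof -
  obtain K where K: "bidegree_le f K K" using bidegree_le_exists by blast
  show ?thesis
    by (rule eq_matI)
      (use assms in \<open>simp_all add: act_entry[OF K] monomial_act_add algebra_simps sum.distrib\<close>)
qed

lemma act_smult_mat: assumes "A \<in> carrier_mat m n"
  shows "act f (x \<cdot>\<^sub>m A) = x \<cdot>\<^sub>m act f A"
proof -
  obtain K where K: "bidegree_le f K K" using bidegree_le_exists by blast
  show ?thesis
    by (rule eq_matI) (use assms in \<open>simp_all add: act_entry[OF K] monomial_act_smult
      algebra_simps sum_distrib_left\<close>)
qed

lemma act_zero_mat: "act f (0\<^sub>m m n) = 0\<^sub>m m n"
proof -
  have "act f (0 \<cdot>\<^sub>m 0\<^sub>m m n) = 0 \<cdot>\<^sub>m act f (0\<^sub>m m n)" by (rule act_smult_mat) simp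
  moreover have "0 \<cdot>\<^sub>m (0\<^sub>m m n :: 'a mat) = 0\<^sub>m m n" by auto
  moreover have "0 \<cdot>\<^sub>m act f (0\<^sub>m m n) = 0\<^sub>m m n" by (rule eq_matI) auto
  ultimately show ?thesis by simp
qed

lemma monomial_act_SucR: "A \<in> carrier_mat m n \<Longrightarrow> monomial_act i (Suc j) A = monomial_act i j A * R"
proof -
  assume A: "A \<in> carrier_mat m n"
  have P: "L ^\<^sub>m i * A \<in> carrier_mat m n" using L A by auto
  have "monomial_act i j A * R = L ^\<^sub>m i * A * (R ^\<^sub>m j * R)"
    unfolding monomial_act_def by (rule assoc_mult_mat[OF P _ R]) (use R in auto)
  then show ?thesis unfolding monomial_act_def by simp
qed

lemma monomial_act_SucL: "A \<in> carrier_mat m n \<Longrightarrow> monomial_act (Suc i) j A = L * monomial_act i j A"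
proof -
  assume A: "A \<in> carrier_mat m n"
  have "L ^\<^sub>m Suc i = L * L ^\<^sub>m i" using pow_mat_commute[OF L] by simp
  have P: "L ^\<^sub>m i \<in> carrier_mat m m" using L by auto
  have "monomial_act (Suc i) j A = (L * L ^\<^sub>m i) * A * R ^\<^sub>m j"
    unfolding monomial_act_def by (simp only: \<open>L ^\<^sub>m Suc i = L * L ^\<^sub>m i\<close>)
  also have "\<dots> = (L * (L ^\<^sub>m i * A)) * R ^\<^sub>m j" by (simp add: assoc_mult_mat[OF L P A])
  also have "\<dots> = L * ((L ^\<^sub>m i * A) * R ^\<^sub>m j)"
    by (rule assoc_mult_mat[OF L]) (use P A R in auto)
  finally show ?thesis unfolding monomial_act_def .
qed

lemma act_add_poly: assumes A: "A \<in> carrier_mat m n"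
  shows "act (f + g) A = act f A + act g A"
proof -
  obtain K1 where K1: "bidegree_le f K1 K1" using bidegree_le_exists by blast
  obtain K2 where K2: "bidegree_le g K2 K2" using bidegree_le_exists by blast
  define K where "K = max K1 K2"
  have Kf: "bidegree_le f K K" using bidegree_le_mono[OF K1] K_def by simp
  have Kg: "bidegree_le g K K" using bidegree_le_mono[OF K2] K_def by simp
  have Kfg: "bidegree_le (f + g) K K" by (rule bidegree_le_add[OF Kf Kg])
  show ?thesis
    by (rule eq_matI) (use A act_carrier in \<open>simp_all add: act_entry[OF Kfg] act_entry[OF Kf]
         act_entry[OF Kg]
         coeff2_add algebra_simps sum.distrib\<close>)
qed

lemma act_smult_const: assumes A: "A \<in> carrier_mat m n"
  shows "act (smult [:c:] g) A = c \<cdot>\<^sub>m act g A"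
proof -
  obtain K where K: "bidegree_le g K K" using bidegree_le_exists by blast
  have K': "bidegree_le (smult [:c:] g) K K" by (rule bidegree_le_smult_const[OF K])
  show ?thesis
    by (rule eq_matI) (use A in \<open>simp_all add: act_entry[OF K] act_entry[OF K']
         coeff2_smult_const algebra_simps sum_distrib_left\<close>)
qed

lemma act_one: assumes A: "A \<in> carrier_mat m n" shows "act 1 A = A"
proof -
  have "monomial_act 0 0 A = A" unfolding monomial_act_def using A L R by simp
  then show ?thesis
    by (intro eq_matI) (use A in \<open>simp_all add: act_entry[OF bidegree_le_one] coeff2_one\<close>)
qed

lemma act_zero_poly: assumes A: "A \<in> carrier_mat m n" shows "act 0 A = 0\<^sub>m m n"
  by (intro eq_matI) (use A in \<open>simp_all add: act_entry[OF bidegree_le_zero] coeff2_def\<close>)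

lemma act_pCons_zero: assumes A: "A \<in> carrier_mat m n"
  shows "act (pCons 0 f) A = act f A * R"
proof -
  obtain K where K: "bidegree_le f K K" using bidegree_le_exists by blast
  have K': "bidegree_le (pCons 0 f) K (Suc K)" by (rule bidegree_le_pCons_zero[OF K])
  show ?thesis
  proof (rule eq_matI)
    fix r c assume rc: "r < dim_row (act f A * R)" "c < dim_col (act f A * R)"
    then have r: "r < m" and c: "c < n" using A R by auto
    have "act (pCons 0 f) A $$ (r,c)
        = (\<Sum>j\<le>Suc K. \<Sum>i\<le>K. coeff2 (pCons 0 f) i j * monomial_act i j A $$ (r,c))"
      by (rule act_entry[OF K' A r c])
    also have "\<dots> = (\<Sum>j\<le>K. \<Sum>i\<le>K. coeff2 f i j * monomial_act i (Suc j) A $$ (r,c))"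
      by (subst sum.atMost_Suc_shift) (simp add: coeff2_pCons_zero)
    also have "\<dots> = (\<Sum>j\<le>K. \<Sum>i\<le>K. coeff2 f i j * (\<Sum>l<n. monomial_act i j A $$ (r,l) * R $$ (l,c)))"
      by (intro sum.cong refl, simp add: monomial_act_SucR[OF A],
          subst index_mult_mat_sum[of _ m n _ n])
         (use monomial_act_carrier[OF A] R r c in auto)
    also have "\<dots> = (\<Sum>l<n. \<Sum>j\<le>K. \<Sum>i\<le>K. coeff2 f i j * monomial_act i j A $$ (r,l) * R $$ (l,c))"
      by (subst sum_swap3) (simp add: sum_distrib_left mult.assoc)
    also have "\<dots> = (\<Sum>l<n. act f A $$ (r,l) * R $$ (l,c))"
      by (intro sum.cong refl) (simp add: act_entry[OF K A r] sum_distrib_right)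
    also have "\<dots> = (act f A * R) $$ (r,c)"
      by (rule index_mult_mat_sum[symmetric]) (use act_carrier[OF A] R r c in auto)
    finally show "act (pCons 0 f) A $$ (r,c) = (act f A * R) $$ (r,c)" .
  qed (use A R in auto)
qed

lemma act_smult_x: assumes A: "A \<in> carrier_mat m n"
  shows "act (smult [:0,1:] f) A = L * act f A"
proof -
  obtain K where K: "bidegree_le f K K" using bidegree_le_exists by blast
  have K': "bidegree_le (smult [:0,1:] f) (Suc K) K" by (rule bidegree_le_smult_x[OF K])
  show ?thesis
  proof (rule eq_matI)
    fix r c assume rc: "r < dim_row (L * act f A)" "c < dim_col (L * act f A)"
    then have r: "r < m" and c: "c < n" using A L by auto
    have "act (smult [:0,1:] f) A $$ (r,c)
        = (\<Sum>j\<le>K. \<Sum>i\<le>Suc K. coeff2 (smult [:0,1:] f) i j * monomial_act i j A $$ (r,c))"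
      by (rule act_entry[OF K' A r c])
    also have "\<dots> = (\<Sum>j\<le>K. \<Sum>i\<le>K. coeff2 f i j * monomial_act (Suc i) j A $$ (r,c))"
      by (rule sum.cong[OF refl], subst sum.atMost_Suc_shift) (simp add: coeff2_smult_x)
    also have "\<dots> = (\<Sum>j\<le>K. \<Sum>i\<le>K. coeff2 f i j * (\<Sum>l<m. L $$ (r,l) * monomial_act i j A $$ (l,c)))"
      by (intro sum.cong refl, simp add: monomial_act_SucL[OF A],
          subst index_mult_mat_sum[of _ m m _ n])
         (use monomial_act_carrier[OF A] L r c in auto)
    also have "\<dots> = (\<Sum>l<m. \<Sum>j\<le>K. \<Sum>i\<le>K. L $$ (r,l) * (coeff2 f i j * monomial_act i j A $$ (l,c)))"
      by (subst sum_swap3) (simp add: sum_distrib_left mult.assoc mult.left_commute)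
    also have "\<dots> = (\<Sum>l<m. L $$ (r,l) * act f A $$ (l,c))"
      by (intro sum.cong refl) (simp add: act_entry[OF K A _ c] sum_distrib_left)
    also have "\<dots> = (L * act f A) $$ (r,c)"
      by (rule index_mult_mat_sum[symmetric]) (use act_carrier[OF A] L r c in auto)
    finally show "act (smult [:0,1:] f) A $$ (r,c) = (L * act f A) $$ (r,c)" .
  qed (use A L in auto)
qed

lemma act_smult_poly: assumes A: "A \<in> carrier_mat m n"
  shows "act (smult a g) A = act [:a:] (act g A)"
proof (induction a)
  case 0
  then show ?case using act_zero_poly[OF A] act_zero_poly[OF act_carrier[OF A]] by simp
next
  case (pCons c a')
  have B: "act g A \<in> carrier_mat m n" by (rule act_carrier[OF A])
  have e1: "smult (pCons c a') g = smult [:c:] g + smult [:0,1:] (smult a' g)"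
  proof -
    have "pCons c a' = [:c:] + pCons 0 a'" by simp
    then have "smult (pCons c a') g = smult ([:c:] + pCons 0 a') g"
      by (rule arg_cong[where f="\<lambda>x. smult x g"])
    then have "smult (pCons c a') g = smult [:c:] g + smult (pCons 0 a') g"
      by (simp only: smult_add_left)
    moreover have "smult (pCons 0 a') g = smult [:0,1:] (smult a' g)" by simp
    ultimately show ?thesis by (simp only:)
  qed
  have e2: "[:pCons c a':] = smult [:c:] 1 + smult [:0,1:] [:a':]"
    by (simp add: one_pCons)
  have "act (smult (pCons c a') g) A = c \<cdot>\<^sub>m act g A + L * act [:a':] (act g A)"
    unfolding e1 by (simp only: act_add_poly[OF A] act_smult_const[OF A] act_smult_x[OF A] pCons.IH)
  also have "\<dots> = act [:pCons c a':] (act g A)"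
    unfolding e2
    by (simp only: act_add_poly[OF B] act_smult_const[OF B] act_smult_x[OF B] act_one[OF B])
  finally show ?case .
qed

lemma act_mult: assumes A: "A \<in> carrier_mat m n"
  shows "act (f * g) A = act f (act g A)"
proof (induction f)
  case 0
  then show ?case using act_zero_poly[OF A] act_zero_poly[OF act_carrier[OF A]] by simp
next
  case (pCons a f')
  have B: "act g A \<in> carrier_mat m n" by (rule act_carrier[OF A])
  have e: "pCons a f' = [:a:] + pCons 0 f'" by simp
  have "act (pCons a f' * g) A = act (smult a g) A + act (f' * g) A * R"
    by (simp add: act_add_poly[OF A] act_pCons_zero[OF A])
  also have "\<dots> = act [:a:] (act g A) + act f' (act g A) * R"
    using pCons.IH act_smult_poly[OF A] by simp
  also have "\<dots> = act (pCons a f') (act g A)"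
  proof -
    have "act (pCons a f') (act g A) = act ([:a:] + pCons 0 f') (act g A)" using e by simp
    also have "\<dots> = act [:a:] (act g A) + act f' (act g A) * R"
      by (simp only: act_add_poly[OF B] act_pCons_zero[OF B])
    finally show ?thesis by simp
  qed
  finally show ?case .
qed

lemma act_commute: assumes A: "A \<in> carrier_mat m n"
  shows "act f (act g A) = act g (act f A)"
  using act_mult[OF A, of f g] act_mult[OF A, of g f] by (simp add: mult.commute)

lemma act_diff_poly: assumes A: "A \<in> carrier_mat m n"
  shows "act (f - g) A = act f A - act g A"
proof -
  have "act f A = act ((f - g) + g) A" by simp
  also have "\<dots> = act (f - g) A + act g A" by (rule act_add_poly[OF A])
  finally show ?thesis using act_carrier[OF A] by auto
qed

lemma act_mat_sum: assumes "finite J" "\<And>j. j \<in> J \<Longrightarrow> g j \<in> carrier_mat m n"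
  shows "act f (mat_sum m n g J) = mat_sum m n (\<lambda>j. act f (g j)) J"
  using assms
proof (induction J rule: finite_induct)
  case empty
  then show ?case by (simp add: mat_sum_empty act_zero_mat)
next
  case (insert j J)
  then show ?case
    by (simp add: mat_sum_insert act_add_mat act_carrier)
qed

lemma act_sum_poly: assumes "finite J" "A \<in> carrier_mat m n"
  shows "act (\<Sum>j\<in>J. f j) A = mat_sum m n (\<lambda>j. act (f j) A) J"
  using assms(1)
proof (induction J rule: finite_induct)
  case empty
  then show ?case by (simp add: mat_sum_empty act_zero_poly[OF assms(2)])
next
  case (insert j J)
  then show ?case
    by (simp add: mat_sum_insert act_add_poly[OF assms(2)] act_carrier[OF assms(2)])
qed

lemma act_mat_sum_compose:
  fixes k :: nat
  assumes J: "finite J" and W: "\<And>j. j \<in> J \<Longrightarrow> W j \<in> carrier_mat m n"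
  shows "mat_sum m n (\<lambda>b. act (P b) (mat_sum m n (\<lambda>j. act (Q b j) (W j)) J)) {..<k}
       = mat_sum m n (\<lambda>j. act (\<Sum>b<k. P b * Q b j) (W j)) J"
proof -
  have "act (P b) (mat_sum m n (\<lambda>j. act (Q b j) (W j)) J)
      = mat_sum m n (\<lambda>j. act (P b * Q b j) (W j)) J" for b
  proof -
    have "act (P b) (mat_sum m n (\<lambda>j. act (Q b j) (W j)) J)
        = mat_sum m n (\<lambda>j. act (P b) (act (Q b j) (W j))) J"
      by (rule act_mat_sum[OF J]) (use W act_carrier in auto)
    also have "\<dots> = mat_sum m n (\<lambda>j. act (P b * Q b j) (W j)) J"
      by (rule mat_sum_cong) (use W act_mult in auto)
    finally show ?thesis .
  qed
  then have "mat_sum m n (\<lambda>b. act (P b) (mat_sum m n (\<lambda>j. act (Q b j) (W j)) J)) {..<k}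
      = mat_sum m n (\<lambda>b. mat_sum m n (\<lambda>j. act (P b * Q b j) (W j)) J) {..<k}"
    by (rule mat_sum_cong)
  also have "\<dots> = mat_sum m n (\<lambda>j. mat_sum m n (\<lambda>b. act (P b * Q b j) (W j)) {..<k}) J"
    by (rule mat_sum_swap)
  also have "\<dots> = mat_sum m n (\<lambda>j. act (\<Sum>b<k. P b * Q b j) (W j)) J"
    by (rule mat_sum_cong) (use W in \<open>simp add: act_sum_poly\<close>)
  finally show ?thesis .
qed

lemma act_mat_sum_mult_eq_smult_one:
  assumes P: "P \<in> carrier_mat k k" and Q: "Q \<in> carrier_mat k k" and PQ: "P * Q = D \<cdot>\<^sub>m 1\<^sub>m k"
    and W: "\<And>c. c < k \<Longrightarrow> W c \<in> carrier_mat m n" and a: "a < k"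
  shows "mat_sum m n (\<lambda>b. act (P $$ (a, b))
      (mat_sum m n (\<lambda>c. act (Q $$ (b, c)) (W c)) {..<k})) {..<k} = act D (W a)"
proof -
  have entry: "(\<Sum>b<k. P $$ (a, b) * Q $$ (b, c)) = (if a = c then D else 0)" if "c < k" for c
    using index_mult_mat_sum[OF P Q a that] PQ a that by (cases "a = c") auto
  have "mat_sum m n (\<lambda>b. act (P $$ (a, b))
      (mat_sum m n (\<lambda>c. act (Q $$ (b, c)) (W c)) {..<k})) {..<k}
      = mat_sum m n (\<lambda>c. act (if a = c then D else 0) (W c)) {..<k}"
    by (subst act_mat_sum_compose) (use W entry in \<open>auto intro: mat_sum_cong\<close>)
  also have "\<dots> = mat_sum m n (\<lambda>c. if c = a then act D (W a) else 0\<^sub>m m n) {..<k}"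
    by (rule mat_sum_cong) (use W act_zero_poly in auto)
  also have "\<dots> = act D (W a)"
    by (rule mat_sum_delta) (use a W act_carrier in auto)
  finally show ?thesis .
qed

end

locale nilpotent_shift =
  fixes lam mu :: "'a::field" and F G :: "'a mat" and m n :: nat
  assumes F: "F \<in> carrier_mat m m" and G: "G \<in> carrier_mat n n"
    and nilF: "\<exists>k. F ^\<^sub>m k = 0\<^sub>m m m" and nilG: "\<exists>k. G ^\<^sub>m k = 0\<^sub>m n n"
begin

sublocale polyapp_setting "lam \<cdot>\<^sub>m 1\<^sub>m m + F" "mu \<cdot>\<^sub>m 1\<^sub>m n + G" m n
  by unfold_locales (use F G in auto)

definition x_lam :: "'a poly poly" where "x_lam = [:[:-lam,1:]:]"

definition y_mu :: "'a poly poly" where "y_mu = [:[:-mu:],1:]"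

lemma act_x_lam: assumes A: "A \<in> carrier_mat m n" shows "act x_lam A = F * A"
proof -
  have e: "x_lam = smult [:0,1:] 1 + smult [:-lam:] 1" by (simp add: one_pCons x_lam_def)
  have "act x_lam A = (lam \<cdot>\<^sub>m 1\<^sub>m m + F) * A + (-lam) \<cdot>\<^sub>m A"
    unfolding e
    by (simp only: act_add_poly[OF A] act_smult_x[OF A] act_smult_const[OF A] act_one[OF A])
  also have "\<dots> = F * A"
    by (rule eq_matI)
      (use A F in \<open>auto simp: add_mult_distrib_mat[of _ m m] mult_smult_assoc_mat[of _ m m]\<close>)
  finally show ?thesis .
qed

lemma act_y_mu: assumes A: "A \<in> carrier_mat m n" shows "act y_mu A = A * G"
proof -
  have e: "y_mu = smult [:-mu:] 1 + pCons 0 1" by (simp add: one_pCons y_mu_def)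
  have "act y_mu A = (-mu) \<cdot>\<^sub>m A + A * (mu \<cdot>\<^sub>m 1\<^sub>m n + G)"
    unfolding e
    by (simp only: act_add_poly[OF A] act_pCons_zero[OF A] act_smult_const[OF A] act_one[OF A])
  also have "A * (mu \<cdot>\<^sub>m 1\<^sub>m n + G) = A * (mu \<cdot>\<^sub>m 1\<^sub>m n) + A * G"
    by (rule mult_add_distrib_mat[OF A]) (use G in auto)
  also have "A * (mu \<cdot>\<^sub>m 1\<^sub>m n) = mu \<cdot>\<^sub>m A"
    using mult_smult_distrib[OF A one_carrier_mat, of mu] A by simp
  also have "(-mu) \<cdot>\<^sub>m A + (mu \<cdot>\<^sub>m A + A * G) = A * G"
    by (rule eq_matI) (use A G in auto)
  finally show ?thesis .
qed

lemma act_x_lam_power: assumes A: "A \<in> carrier_mat m n" shows "act (x_lam ^ k) A = F ^\<^sub>m k * A"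
proof (induction k)
  case 0 then show ?case using A F act_one[OF A] by simp
next
  case (Suc k)
  have P: "F ^\<^sub>m k \<in> carrier_mat m m" using F by simp
  have "act (x_lam ^ Suc k) A = act x_lam (act (x_lam ^ k) A)" by (simp add: act_mult[OF A])
  also have "\<dots> = F * (F ^\<^sub>m k * A)" using Suc act_x_lam P A by simp
  also have "\<dots> = (F * F ^\<^sub>m k) * A" by (rule assoc_mult_mat[symmetric, OF F P A])
  also have "F * F ^\<^sub>m k = F ^\<^sub>m Suc k" using pow_mat_commute[OF F, of k] by simp
  finally show ?case .
qed

lemma act_y_mu_power: "A \<in> carrier_mat m n \<Longrightarrow> act (y_mu ^ k) A = A * G ^\<^sub>m k"
proof (induction k arbitrary: A)
  case 0 then show ?case using act_one[OF 0] G 0 by simp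
next
  case (Suc k)
  have A: "A \<in> carrier_mat m n" by fact
  have P: "G ^\<^sub>m k \<in> carrier_mat n n" using G by simp
  have AG: "A * G \<in> carrier_mat m n" using A G by simp
  have "act (y_mu ^ Suc k) A = act (y_mu ^ k) (act y_mu A)"
    by (simp only: power_Suc2 act_mult[OF A])
  also have "\<dots> = (A * G) * G ^\<^sub>m k" using act_y_mu[OF A] Suc.IH[OF AG] by simp
  also have "\<dots> = A * (G * G ^\<^sub>m k)" by (rule assoc_mult_mat[OF A G P])
  also have "G * G ^\<^sub>m k = G ^\<^sub>m Suc k" using pow_mat_commute[OF G, of k] by simp
  finally show ?case .
qed

definition in_point_ideal :: "'a poly poly \<Rightarrow> bool" where
  "in_point_ideal u \<longleftrightarrow> (\<exists>a b. u = x_lam * a + y_mu * b)"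

lemma act_power_in_point_ideal_vanishes:
  "\<exists>K. \<forall>u A. in_point_ideal u \<longrightarrow> A \<in> carrier_mat m n \<longrightarrow> act (u ^ K) A = 0\<^sub>m m n"
proof -
  obtain k1 where k1: "F ^\<^sub>m k1 = 0\<^sub>m m m" using nilF by blast
  obtain k2 where k2: "G ^\<^sub>m k2 = 0\<^sub>m n n" using nilG by blast
  define K where "K = k1 + k2"
  have "act ((x_lam * a + y_mu * b) ^ K) A = 0\<^sub>m m n" if A: "A \<in> carrier_mat m n" for a b A
  proof -
    define rest where "rest i = of_nat (K choose i) * a ^ i * b ^ (K - i)" for i
    have "(x_lam * a + y_mu * b) ^ K
        = (\<Sum>i\<le>K. of_nat (K choose i) * (x_lam * a) ^ i * (y_mu * b) ^ (K - i))"
      by (rule binomial_ring)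
    also have "\<dots> = (\<Sum>i\<le>K. x_lam ^ i * (rest i * y_mu ^ (K - i)))"
      by (rule sum.cong[OF refl]) (simp add: rest_def power_mult_distrib mult_ac)
    finally have binomial:
      "(x_lam * a + y_mu * b) ^ K = (\<Sum>i\<le>K. x_lam ^ i * (rest i * y_mu ^ (K - i)))" .
    have "act (x_lam ^ i * (rest i * y_mu ^ (K - i))) A = 0\<^sub>m m n" if "i \<le> K" for i
    proof -
      have "act (x_lam ^ i * (rest i * y_mu ^ (K - i))) A
          = F ^\<^sub>m i * act (rest i) (A * G ^\<^sub>m (K - i))"
        using A G by (simp add: act_mult act_x_lam_power act_y_mu_power act_carrier)
      also have "\<dots> = 0\<^sub>m m n"
      proof (cases "k1 \<le> i")
        case True
        then have "F ^\<^sub>m i = 0\<^sub>m m m" using pow_mat_zero_mono[OF F k1] by simp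
        then show ?thesis using A G act_carrier by simp
      next
        case False
        then have "k2 \<le> K - i" using K_def by simp
        then have "G ^\<^sub>m (K - i) = 0\<^sub>m n n" using pow_mat_zero_mono[OF G k2] by simp
        then have "A * G ^\<^sub>m (K - i) = 0\<^sub>m m n" using A by simp
        then show ?thesis using F act_zero_mat by simp
      qed
      finally show ?thesis .
    qed
    then show ?thesis unfolding binomial act_sum_poly[OF finite_atMost A]
      by (intro mat_sum_zero) auto
  qed
  then show ?thesis unfolding in_point_ideal_def by blast
qed

lemma in_point_ideal_if_vanishing:
  assumes "eval2 e lam mu = 0"
  shows "in_point_ideal e"
proof -
  have division: "[:-[:mu:], 1:] * synthetic_div e [:mu:] + [:poly e [:mu:]:] = e"
    by (rule synthetic_div_correct')
  have "poly (poly e [:mu:]) lam = 0" using assms by (simp add: eval2_eq_poly_poly)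
  then have "[:-lam, 1:] dvd poly e [:mu:]" using poly_eq_0_iff_dvd by blast
  then obtain s where s: "poly e [:mu:] = [:-lam, 1:] * s" by (rule dvdE)
  have "[:poly e [:mu:]:] = x_lam * [:s:]" using s by (simp add: x_lam_def)
  moreover have "[:-[:mu:], 1:] = y_mu" by (simp add: y_mu_def)
  ultimately have "e = x_lam * [:s:] + y_mu * synthetic_div e [:mu:]"
    using division by (simp add: add.commute)
  then show ?thesis unfolding in_point_ideal_def by blast
qed

lemma eq_smult_one_minus_point_ideal:
  assumes c: "eval2 D lam mu = c" "c \<noteq> 0"
  obtains u where "in_point_ideal u" "D = smult [:c:] (1 - u)"
proof
  define e where "e = D - [:[:c:]:]"
  have "in_point_ideal e"
    by (rule in_point_ideal_if_vanishing) (simp add: e_def c(1) eval2_hom.hom_minus)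
  then show "in_point_ideal (smult [:- inverse c:] e)"
    unfolding in_point_ideal_def by (metis mult_smult_right smult_add_right)
  have "smult [:c:] (1 - smult [:- inverse c:] e)
      = smult [:c:] 1 - smult ([:c:] * [:- inverse c:]) e"
    by (simp add: smult_diff_right)
  also have "[:c:] * [:- inverse c:] = [:-1:]" using c by simp
  also have "smult [:c:] 1 - smult [:-1:] e = [:[:c:]:] + e"
  proof -
    have "smult [:-1:] e = - e" by (rule poly_eqI) simp
    then show ?thesis by (simp add: one_pCons)
  qed
  finally show "D = smult [:c:] (1 - smult [:- inverse c:] e)"
    unfolding e_def by simp
qed

text \<open>Write D = c (1 - u) with c = D(lam, mu) and u in the ideal of the point (lam, mu); as u
  acts nilpotently, the truncated geometric series of u divided by c inverts the action of D.\<close>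

lemma act_invertible:
  assumes "eval2 D lam mu \<noteq> 0"
  shows "\<exists>h. \<forall>A\<in>carrier_mat m n. act h (act D A) = A \<and> act D (act h A) = A"
proof -
  define c where "c = eval2 D lam mu"
  have "c \<noteq> 0" using assms c_def by simp
  obtain u where u: "in_point_ideal u" and D: "D = smult [:c:] (1 - u)"
    using eq_smult_one_minus_point_ideal[OF c_def[symmetric] \<open>c \<noteq> 0\<close>] by blast
  obtain K where K: "\<And>A. A \<in> carrier_mat m n \<Longrightarrow> act (u ^ K) A = 0\<^sub>m m n"
    using act_power_in_point_ideal_vanishes u by blast
  define h where "h = smult [:inverse c:] (\<Sum>i<K. u ^ i)"
  have one: "[:1:] = (1 :: 'a poly)" by (simp add: one_pCons)
  have "D * h = (1 - u) * (\<Sum>i<K. u ^ i)"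
    using \<open>c \<noteq> 0\<close> unfolding D h_def by (simp add: mult_smult_left mult_smult_right smult_smult one)
  also have "\<dots> = 1 - u ^ K" by (rule one_diff_power_eq[symmetric])
  finally have Dh: "D * h = 1 - u ^ K" .
  have "act D (act h A) = A" if A: "A \<in> carrier_mat m n" for A
  proof -
    have "A - 0\<^sub>m m n = A" by (rule eq_matI) (use A in auto)
    then have "act (D * h) A = A"
      unfolding Dh using A K[OF A] by (simp add: act_diff_poly act_one)
    then show ?thesis using act_mult[OF A] by simp
  qed
  then show ?thesis
    using act_commute by metis
qed

end

section \<open>Systems with a nonvanishing leading minor\<close>

definition minor :: "(nat \<Rightarrow> nat \<Rightarrow> 'a::comm_ring_1 poly poly) \<Rightarrow> nat \<Rightarrow> nat list \<Rightarrow> 'a poly poly mat"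
  where "minor fs w cs = mat w w (\<lambda>(a, b). fs (a + 1) (cs ! b))"

definition list_pos :: "'b list \<Rightarrow> 'b \<Rightarrow> nat" where
  "list_pos cs j = (THE b. b < length cs \<and> cs ! b = j)"

lemma list_pos_nth: "distinct cs \<Longrightarrow> b < length cs \<Longrightarrow> list_pos cs (cs ! b) = b"
  unfolding list_pos_def by (rule the_equality) (auto simp: nth_eq_iff_index_eq)

lemma nth_list_pos: "distinct cs \<Longrightarrow> j \<in> set cs \<Longrightarrow> list_pos cs j < length cs \<and> cs ! list_pos cs j = j"
  by (metis list_pos_nth in_set_conv_nth)

locale minor_system = nilpotent_shift lam mu F G m n
  for lam mu :: "'a::field" and F G m n +
  fixes fs :: "nat \<Rightarrow> nat \<Rightarrow> 'a poly poly" and t w :: nat and cs :: "nat list"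
  assumes cs: "distinct cs" "set cs \<subseteq> {1..t}" "length cs = w"
begin

abbreviation B where "B \<equiv> minor fs w cs"
abbreviation Delta where "Delta \<equiv> det B"
abbreviation adj where "adj \<equiv> adj_mat B"

abbreviation lhs :: "nat \<Rightarrow> (nat \<Rightarrow> 'a mat) \<Rightarrow> 'a mat" where
  "lhs i Z \<equiv> mat_sum m n (\<lambda>j. act (fs i j) (Z j)) {1..t}"

abbreviation free_part :: "nat \<Rightarrow> (nat \<Rightarrow> 'a mat) \<Rightarrow> 'a mat" where
  "free_part i Z \<equiv> mat_sum m n (\<lambda>j. act (fs i j) (Z j)) ({1..t} - set cs)"

lemma sys_lhs_eq_lhs: "sys_lhs fs t i lam mu m n F G Z = lhs i Z"
  unfolding sys_lhs_def mat_sum_def by simp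

lemma B_carrier: "B \<in> carrier_mat w w"
  unfolding minor_def by simp

lemma adj_carrier: "adj \<in> carrier_mat w w"
  using adj_mat[OF B_carrier] by auto

lemma lhs_split:
  assumes Z: "\<And>j. j \<in> {1..t} \<Longrightarrow> Z j \<in> carrier_mat m n" and i: "i < w"
  shows "lhs (i + 1) Z
    = mat_sum m n (\<lambda>b. act (B $$ (i, b)) (Z (cs ! b))) {..<w} + free_part (i + 1) Z"
proof -
  have split: "{1..t} = set cs \<union> ({1..t} - set cs)" using cs by auto
  have "lhs (i + 1) Z = mat_sum m n (\<lambda>j. act (fs (i + 1) j) (Z j)) (set cs) + free_part (i + 1) Z"
    by (subst split, rule mat_sum_union) (use Z act_carrier cs in auto)
  also have "mat_sum m n (\<lambda>j. act (fs (i + 1) j) (Z j)) (set cs)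
      = mat_sum m n (\<lambda>b. act (fs (i + 1) (cs ! b)) (Z (cs ! b))) {..<w}"
  proof -
    have "set cs = (!) cs ` {..<w}"
      using cs(3) by (auto simp: in_set_conv_nth)
    then show ?thesis
      using inj_on_nth[OF cs(1), of "{..<w}"] cs(3) by (simp add: mat_sum_reindex)
  qed
  also have "\<dots> = mat_sum m n (\<lambda>b. act (B $$ (i, b)) (Z (cs ! b))) {..<w}"
    by (rule mat_sum_cong) (use i in \<open>simp add: minor_def\<close>)
  finally show ?thesis .
qed

lemma solution_exists:
  assumes inv: "eval2 Delta lam mu \<noteq> 0"
    and N: "\<And>a. a \<in> {1..w} \<Longrightarrow> N a \<in> carrier_mat m n"
    and U: "\<And>j. U j \<in> carrier_mat m n"
  shows "\<exists>Z. is_solution fs t w lam mu m n F G N Z \<and> (\<forall>j\<in>{1..t} - set cs. Z j = U j)"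
proof -
  obtain h where h: "\<And>A. A \<in> carrier_mat m n \<Longrightarrow> act h (act Delta A) = A \<and> act Delta (act h A) = A"
    using act_invertible[OF inv] by blast
  define N' where "N' a = N (a + 1) - free_part (a + 1) U" for a
  define M where "M b = mat_sum m n (\<lambda>a. act (adj $$ (b, a)) (N' a)) {..<w}" for b
  define Z where "Z j = (if j \<in> set cs then act h (M (list_pos cs j)) else U j)" for j
  have N'_carrier: "N' a \<in> carrier_mat m n" if "a < w" for a
    unfolding N'_def using N[of "a + 1"] that by (intro minus_carrier_mat) auto
  have M_carrier: "M b \<in> carrier_mat m n" for b
    unfolding M_def by simp
  have Z_carrier: "Z j \<in> carrier_mat m n" for j
    unfolding Z_def using act_carrier[OF M_carrier] U by simp
  have Z_cs: "Z (cs ! b) = act h (M b)" if "b < w" for b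
    unfolding Z_def using that cs list_pos_nth[OF cs(1), of b] by auto
  have eq: "sys_lhs fs t (i + 1) lam mu m n F G Z = N (i + 1)" if i: "i < w" for i
  proof -
    have "sys_lhs fs t (i + 1) lam mu m n F G Z
        = mat_sum m n (\<lambda>b. act (B $$ (i, b)) (Z (cs ! b))) {..<w} + free_part (i + 1) Z"
      unfolding sys_lhs_eq_lhs by (rule lhs_split) (use Z_carrier i in auto)
    also have "mat_sum m n (\<lambda>b. act (B $$ (i, b)) (Z (cs ! b))) {..<w}
        = mat_sum m n (\<lambda>b. act h (act (B $$ (i, b)) (M b))) {..<w}"
      by (rule mat_sum_cong) (simp add: Z_cs act_commute[OF M_carrier])
    also have "\<dots> = act h (mat_sum m n (\<lambda>b. act (B $$ (i, b)) (M b)) {..<w})"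
      by (rule act_mat_sum[symmetric]) (use M_carrier act_carrier in auto)
    also have "mat_sum m n (\<lambda>b. act (B $$ (i, b)) (M b)) {..<w} = act Delta (N' i)"
      unfolding M_def
      by (rule act_mat_sum_mult_eq_smult_one[OF B_carrier adj_carrier _ N'_carrier i])
        (use adj_mat[OF B_carrier] in auto)
    also have "act h (act Delta (N' i)) = N' i" using h N'_carrier[OF i] by blast
    also have "free_part (i + 1) Z = free_part (i + 1) U"
      by (rule mat_sum_cong) (simp add: Z_def)
    also have "N' i + free_part (i + 1) U = N (i + 1)"
      unfolding N'_def by (rule mat_diff_add_cancel[of _ m n]) (use N i in auto)
    finally show ?thesis .
  qed
  have "sys_lhs fs t i lam mu m n F G Z = N i" if "i \<in> {1..w}" for i
    using eq[of "i - 1"] that by (cases i) auto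
  then have "is_solution fs t w lam mu m n F G N Z"
    unfolding is_solution_def using Z_carrier by blast
  then show ?thesis by (auto simp: Z_def)
qed

lemma Delta_act_solution:
  assumes sol: "is_solution fs t w lam mu m n F G N Z" and b: "b < w"
  shows "act Delta (Z (cs ! b))
    = mat_sum m n (\<lambda>a. act (adj $$ (b, a)) (N (a + 1) - free_part (a + 1) Z)) {..<w}"
proof -
  have Z: "\<And>j. j \<in> {1..t} \<Longrightarrow> Z j \<in> carrier_mat m n" using sol unfolding is_solution_def by blast
  have eqs: "lhs (a + 1) Z = N (a + 1)" if "a < w" for a
    using sol that unfolding is_solution_def sys_lhs_eq_lhs by auto
  have Z_cs: "Z (cs ! b') \<in> carrier_mat m n" if "b' < w" for b'
    using Z cs that nth_mem by blast
  have "act Delta (Z (cs ! b))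
      = mat_sum m n (\<lambda>a. act (adj $$ (b, a))
          (mat_sum m n (\<lambda>b'. act (B $$ (a, b')) (Z (cs ! b'))) {..<w})) {..<w}"
    by (rule act_mat_sum_mult_eq_smult_one[symmetric, OF adj_carrier B_carrier _ Z_cs b])
      (use adj_mat[OF B_carrier] in auto)
  also have "\<dots> = mat_sum m n (\<lambda>a. act (adj $$ (b, a)) (N (a + 1) - free_part (a + 1) Z)) {..<w}"
  proof (rule mat_sum_cong)
    fix a assume a: "a \<in> {..<w}"
    have "mat_sum m n (\<lambda>b'. act (B $$ (a, b')) (Z (cs ! b'))) {..<w}
        = lhs (a + 1) Z - free_part (a + 1) Z"
      by (rule mat_eq_add_imp_diff[OF _ _ _ lhs_split[OF Z]]) (use Z a in auto)
    then show "act (adj $$ (b, a)) (mat_sum m n (\<lambda>b'. act (B $$ (a, b')) (Z (cs ! b'))) {..<w})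
        = act (adj $$ (b, a)) (N (a + 1) - free_part (a + 1) Z)"
      using eqs a by simp
  qed
  finally show ?thesis .
qed

lemma solution_unique:
  assumes inv: "eval2 Delta lam mu \<noteq> 0"
    and X: "is_solution fs t w lam mu m n F G N X" and Y: "is_solution fs t w lam mu m n F G N Y"
    and agree: "\<forall>j\<in>{1..t} - set cs. X j = Y j"
  shows "\<forall>j\<in>{1..t}. X j = Y j"
proof
  fix j assume j: "j \<in> {1..t}"
  show "X j = Y j"
  proof (cases "j \<in> set cs")
    case False
    then show ?thesis using agree j by blast
  next
    case True
    obtain h where h: "\<And>A. A \<in> carrier_mat m n \<Longrightarrow> act h (act Delta A) = A"
      using act_invertible[OF inv] by blast
    define b where "b = list_pos cs j"
    have b: "b < w" "cs ! b = j" using nth_list_pos[OF cs(1) True] cs(3) b_def by auto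
    have "free_part i X = free_part i Y" for i
      by (rule mat_sum_cong) (use agree in auto)
    then have "act Delta (X j) = act Delta (Y j)"
      using Delta_act_solution[OF X b(1)] Delta_act_solution[OF Y b(1)] b(2) by simp
    moreover have "X j \<in> carrier_mat m n" "Y j \<in> carrier_mat m n"
      using X Y j unfolding is_solution_def by auto
    ultimately show ?thesis using h by metis
  qed
qed

text \<open>Laplace expansion of the bordered minor along its last column combines the equations
  1, ..., w + 1 with coefficients independent of the bordering column j; the last coefficient is
  Delta itself.\<close>

definition bordered_minor :: "nat \<Rightarrow> 'a poly poly mat" where
  "bordered_minor j = minor fs (w + 1) (cs @ [j])"

definition border_cofactor :: "nat \<Rightarrow> 'a poly poly" where
  "border_cofactor a = cofactor (bordered_minor 0) a w"

lemma bordered_minor_carrier: "bordered_minor j \<in> carrier_mat (w + 1) (w + 1)"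
  unfolding bordered_minor_def minor_def by simp

lemma det_bordered_minor: "det (bordered_minor j) = (\<Sum>a<Suc w. border_cofactor a * fs (a + 1) j)"
proof -
  have last_col: "bordered_minor j $$ (a, w) = fs (a + 1) j" if "a < w + 1" for a
    using that cs(3) by (simp add: bordered_minor_def minor_def nth_append)
  have "mat_delete (bordered_minor j) a w = mat_delete (bordered_minor 0) a w" for a
    by (rule eq_matI)
      (use cs(3) in \<open>auto simp: mat_delete_def bordered_minor_def minor_def nth_append\<close>)
  then have "cofactor (bordered_minor j) a w = border_cofactor a" for a
    unfolding border_cofactor_def cofactor_def by simp
  then show ?thesis
    using laplace_expansion_column[OF bordered_minor_carrier, of w j] last_col
    by (simp add: mult.commute)
qed

lemma border_cofactor_last: "border_cofactor w = Delta"
proof -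
  have "mat_delete (bordered_minor 0) w w = B"
    by (rule eq_matI)
      (use cs(3) in \<open>auto simp: mat_delete_def bordered_minor_def minor_def nth_append\<close>)
  then show ?thesis unfolding border_cofactor_def cofactor_def by simp
qed

lemma border_cofactor_combination:
  assumes Z: "\<And>j. j \<in> {1..t} \<Longrightarrow> Z j \<in> carrier_mat m n"
  shows "mat_sum m n (\<lambda>a. act (border_cofactor a) (lhs (a + 1) Z)) {..<Suc w}
    = mat_sum m n (\<lambda>j. act (det (bordered_minor j)) (Z j)) {1..t}"
  unfolding det_bordered_minor by (rule act_mat_sum_compose) (use Z in auto)

lemma border_cofactor_combination_homogeneous:
  assumes sol: "is_solution fs t w lam mu m n F G (\<lambda>_. 0\<^sub>m m n) Z"
  shows "mat_sum m n (\<lambda>a. act (border_cofactor a) (lhs (a + 1) Z)) {..<Suc w}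
    = act Delta (lhs (w + 1) Z)"
proof -
  have homogeneous: "lhs (a + 1) Z = 0\<^sub>m m n" if "a < w" for a
    using sol that unfolding is_solution_def sys_lhs_eq_lhs by auto
  have "mat_sum m n (\<lambda>a. act (border_cofactor a) (lhs (a + 1) Z)) {..<Suc w}
      = act (border_cofactor w) (lhs (w + 1) Z)
        + mat_sum m n (\<lambda>a. act (border_cofactor a) (lhs (a + 1) Z)) {..<w}"
    unfolding lessThan_Suc by (rule mat_sum_insert) (auto simp: act_carrier)
  also have "mat_sum m n (\<lambda>a. act (border_cofactor a) (lhs (a + 1) Z)) {..<w} = 0\<^sub>m m n"
  proof (rule mat_sum_zero)
    fix a assume "a \<in> {..<w}"
    then show "act (border_cofactor a) (lhs (a + 1) Z) = 0\<^sub>m m n"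
      using homogeneous[of a] by (simp add: act_zero_mat)
  qed
  finally show ?thesis
    using border_cofactor_last act_carrier by simp
qed

lemma next_equation_in_image:
  assumes inv: "eval2 Delta lam mu \<noteq> 0"
    and dvd: "\<forall>j\<in>{1..t}. d dvd det (bordered_minor j)"
    and sol: "is_solution fs t w lam mu m n F G (\<lambda>_. 0\<^sub>m m n) Z"
  shows "\<exists>S\<in>carrier_mat m n. sys_lhs fs t (w + 1) lam mu m n F G Z = act d S"
proof -
  obtain h where h: "\<And>A. A \<in> carrier_mat m n \<Longrightarrow> act h (act Delta A) = A"
    using act_invertible[OF inv] by blast
  obtain q where q: "\<forall>j\<in>{1..t}. det (bordered_minor j) = d * q j"
    using bchoice[OF dvd[unfolded dvd_def]] by blast
  have Z: "\<And>j. j \<in> {1..t} \<Longrightarrow> Z j \<in> carrier_mat m n"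
    using sol unfolding is_solution_def by blast
  define Y where "Y = mat_sum m n (\<lambda>j. act (q j) (Z j)) {1..t}"
  have "act Delta (lhs (w + 1) Z) = mat_sum m n (\<lambda>j. act (det (bordered_minor j)) (Z j)) {1..t}"
    using border_cofactor_combination_homogeneous[OF sol] border_cofactor_combination[OF Z]
    by simp
  also have "\<dots> = mat_sum m n (\<lambda>j. act d (act (q j) (Z j))) {1..t}"
    by (rule mat_sum_cong) (use q Z act_mult in auto)
  also have "\<dots> = act d Y"
    unfolding Y_def by (rule act_mat_sum[symmetric]) (use Z act_carrier in auto)
  finally have "lhs (w + 1) Z = act h (act d Y)"
    using h[of "lhs (w + 1) Z"] by simp
  also have "\<dots> = act d (act h Y)"
    by (rule act_commute) (simp add: Y_def)
  finally show ?thesis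
    unfolding sys_lhs_eq_lhs using act_carrier[of Y h] by (auto simp: Y_def)
qed

end

lemma distinct_if_det_minor_nonzero:
  assumes "length cs = w" "det (minor fs w cs) \<noteq> 0"
  shows "distinct cs"
proof (rule ccontr)
  assume "\<not> distinct cs"
  then obtain i j where ij: "i < w" "j < w" "i \<noteq> j" "cs ! i = cs ! j"
    using assms(1) distinct_conv_nth by metis
  have "det (minor fs w cs) = 0"
  proof (rule det_identical_columns[OF _ ij(3) ij(1) ij(2)])
    show "minor fs w cs \<in> carrier_mat w w" by (simp add: minor_def)
    show "col (minor fs w cs) i = col (minor fs w cs) j"
      by (rule eq_vecI) (use ij in \<open>auto simp: minor_def\<close>)
  qed
  with assms(2) show False by simp
qed

lemma minor_system_if_minor_nonvanishing:
  fixes fs :: "nat \<Rightarrow> nat \<Rightarrow> 'a::field poly poly"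
  assumes "admissible m n F G" "length cs = w" "set cs \<subseteq> {1..t}"
    and "eval2 (det (minor fs w cs)) lam mu \<noteq> 0"
  shows "minor_system F G m n t w cs"
proof -
  have "distinct cs"
    by (rule distinct_if_det_minor_nonzero[where fs = fs, OF assms(2)]) (use assms(4) in auto)
  moreover have "F \<in> carrier_mat m m" "G \<in> carrier_mat n n" "nilpotent_mat F" "nilpotent_mat G"
    using assms(1) unfolding admissible_def by auto
  ultimately show ?thesis
    unfolding minor_system_def nilpotent_shift_def minor_system_axioms_def
    using assms(2,3) by (auto simp: nilpotent_mat_def)
qed

lemma solvable_if_minor_nonvanishing:
  fixes fs :: "nat \<Rightarrow> nat \<Rightarrow> 'a::field poly poly"
  assumes adm: "admissible m n F G" and cols: "length cs = w" "set cs \<subseteq> {1..t}"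
    and nonzero: "eval2 (det (minor fs w cs)) lam mu \<noteq> 0"
    and N: "\<forall>i\<in>{1..w}. N i \<in> carrier_mat m n"
  shows "solvable fs t w lam mu m n F G N"
proof -
  interpret minor_system lam mu F G m n fs t w cs
    using minor_system_if_minor_nonvanishing[OF adm cols nonzero] .
  have "\<exists>Z. is_solution fs t w lam mu m n F G N Z \<and> (\<forall>j\<in>{1..t} - set cs. Z j = 0\<^sub>m m n)"
    by (rule solution_exists[OF nonzero]) (use N in auto)
  then show ?thesis
    unfolding solvable_def by blast
qed

lemma solutions_parametrized_by_free_unknowns:
  fixes fs :: "nat \<Rightarrow> nat \<Rightarrow> 'a::field poly poly"
  assumes adm: "admissible m n F G" and cols: "length cs = w" "set cs \<subseteq> {1..t}"
    and nonzero: "eval2 (det (minor fs w cs)) lam mu \<noteq> 0"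
    and js: "bij_betw js {1..t - w} ({1..t} - set cs)"
    and N: "\<forall>i\<in>{1..w}. N i \<in> carrier_mat m n"
  shows "solvable fs t w lam mu m n F G N \<and>
    (\<forall>S. (\<forall>a\<in>{1..t - w}. S a \<in> carrier_mat m n) \<longrightarrow>
      (\<exists>X. is_solution fs t w lam mu m n F G N X \<and> (\<forall>a\<in>{1..t - w}. X (js a) = S a)) \<and>
      (\<forall>X Y. is_solution fs t w lam mu m n F G N X \<and> (\<forall>a\<in>{1..t - w}. X (js a) = S a) \<and>
             is_solution fs t w lam mu m n F G N Y \<and> (\<forall>a\<in>{1..t - w}. Y (js a) = S a)
             \<longrightarrow> (\<forall>j\<in>{1..t}. X j = Y j)))"
proof (intro conjI allI impI)
  interpret minor_system lam mu F G m n fs t w cs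
    using minor_system_if_minor_nonvanishing[OF adm cols nonzero] .
  have inj: "inj_on js {1..t - w}" and img: "js ` {1..t - w} = {1..t} - set cs"
    using js by (auto simp: bij_betw_def)
  have js_inv: "js (the_inv_into {1..t - w} js j) = j" "the_inv_into {1..t - w} js j \<in> {1..t - w}"
    if "j \<in> {1..t} - set cs" for j
    using f_the_inv_into_f[OF inj] the_inv_into_into[OF inj _ order_refl] that img by auto
  show "solvable fs t w lam mu m n F G N"
    by (rule solvable_if_minor_nonvanishing[OF adm cols nonzero N])
  fix S :: "nat \<Rightarrow> 'a mat" assume S: "\<forall>a\<in>{1..t - w}. S a \<in> carrier_mat m n"
  define U where
    "U j = (if j \<in> {1..t} - set cs then S (the_inv_into {1..t - w} js j) else 0\<^sub>m m n)" for j
  have "\<exists>Z. is_solution fs t w lam mu m n F G N Z \<and> (\<forall>j\<in>{1..t} - set cs. Z j = U j)"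
    by (rule solution_exists[OF nonzero]) (use N S js_inv in \<open>auto simp: U_def\<close>)
  then obtain Z where Z: "is_solution fs t w lam mu m n F G N Z" "\<forall>j\<in>{1..t} - set cs. Z j = U j"
    by blast
  have "Z (js a) = S a" if "a \<in> {1..t - w}" for a
  proof -
    have "js a \<in> {1..t} - set cs" using that img by blast
    then show ?thesis using Z(2) that inj by (simp add: U_def the_inv_into_f_f)
  qed
  then show "\<exists>X. is_solution fs t w lam mu m n F G N X \<and> (\<forall>a\<in>{1..t - w}. X (js a) = S a)"
    using Z(1) by blast
  fix X Y assume XY: "is_solution fs t w lam mu m n F G N X \<and> (\<forall>a\<in>{1..t - w}. X (js a) = S a) \<and>
    is_solution fs t w lam mu m n F G N Y \<and> (\<forall>a\<in>{1..t - w}. Y (js a) = S a)"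
  then have "\<forall>j\<in>{1..t} - set cs. X j = Y j"
    using js_inv by metis
  then show "\<forall>j\<in>{1..t}. X j = Y j"
    using solution_unique[OF nonzero] XY by blast
qed

lemma next_equation_through_divisor:
  fixes fs :: "nat \<Rightarrow> nat \<Rightarrow> 'a::field poly poly"
  assumes adm: "admissible m n F G" and cols: "length cs = w" "set cs \<subseteq> {1..t}"
    and nonzero: "eval2 (det (minor fs w cs)) lam mu \<noteq> 0"
    and dvd: "\<forall>j\<in>{1..t}. d dvd det (minor fs (w + 1) (cs @ [j]))"
    and sol: "is_solution fs t w lam mu m n F G (\<lambda>_. 0\<^sub>m m n) X"
  shows "\<exists>S\<in>carrier_mat m n. sys_lhs fs t (w + 1) lam mu m n F G X =
           polyapp (lam \<cdot>\<^sub>m 1\<^sub>m m + F) (mu \<cdot>\<^sub>m 1\<^sub>m n + G) d S"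
proof -
  interpret minor_system lam mu F G m n fs t w cs
    using minor_system_if_minor_nonvanishing[OF adm cols nonzero] .
  show ?thesis
    using next_equation_in_image[OF nonzero _ sol] dvd unfolding bordered_minor_def by blast
qed

definition leading_rows_full_rank ::
    "(nat \<Rightarrow> nat \<Rightarrow> 'a::comm_ring_1 poly poly) \<Rightarrow> nat \<Rightarrow> nat \<Rightarrow> 'a \<Rightarrow> 'a \<Rightarrow> bool" where
  "leading_rows_full_rank fs t w lam mu \<longleftrightarrow>
     (\<exists>cs. length cs = w \<and> set cs \<subseteq> {1..t} \<and> eval2 (det (minor fs w cs)) lam mu \<noteq> 0)"

lemma maximal_minor_if_unsolvable:
  fixes fs :: "nat \<Rightarrow> nat \<Rightarrow> 'a::field poly poly"
  assumes "admissible m n F G" "\<forall>i\<in>{1..p}. N i \<in> carrier_mat m n"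
    and "\<not> solvable fs t p lam mu m n F G N"
  obtains w cs where "w < p" "length cs = w" "set cs \<subseteq> {1..t}"
    "eval2 (det (minor fs w cs)) lam mu \<noteq> 0" "\<not> leading_rows_full_rank fs t (w + 1) lam mu"
proof -
  have "leading_rows_full_rank fs t 0 lam mu"
    unfolding leading_rows_full_rank_def by (intro exI[of _ "[]"]) (simp add: minor_def)
  moreover have "\<not> leading_rows_full_rank fs t p lam mu"
  proof
    assume "leading_rows_full_rank fs t p lam mu"
    then obtain cs where "length cs = p" "set cs \<subseteq> {1..t}" "eval2 (det (minor fs p cs)) lam mu \<noteq> 0"
      unfolding leading_rows_full_rank_def by blast
    then have "solvable fs t p lam mu m n F G N"
      by (intro solvable_if_minor_nonvanishing[OF assms(1) _ _ _ assms(2)])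
    with assms(3) show False ..
  qed
  ultimately obtain w where "w < p" "leading_rows_full_rank fs t w lam mu"
    "\<not> leading_rows_full_rank fs t (w + 1) lam mu"
    using ex_least_nat_less[of "\<lambda>w. \<not> leading_rows_full_rank fs t w lam mu" p] by auto
  then show ?thesis
    using that unfolding leading_rows_full_rank_def by blast
qed

lemma common_maximal_minor:
  fixes fs :: "nat \<Rightarrow> nat \<Rightarrow> 'a::field poly poly"
  assumes "infinite D"
    and "\<forall>(lam, mu)\<in>D. \<exists>m n F G N. admissible m n F G \<and>
           (\<forall>i\<in>{1..p}. N i \<in> carrier_mat m n) \<and> \<not> solvable fs t p lam mu m n F G N"
  obtains w cs D1 where "D1 \<subseteq> D" "infinite D1" "w < p"
    "distinct cs" "length cs = w" "set cs \<subseteq> {1..t}"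
    "\<forall>(lam, mu)\<in>D1. eval2 (det (minor fs w cs)) lam mu \<noteq> 0"
    "\<forall>j\<in>{1..t}. \<forall>(lam, mu)\<in>D1. eval2 (det (minor fs (w + 1) (cs @ [j]))) lam mu = 0"
proof -
  define candidates where "candidates = {(w, cs). w < p \<and> length cs = w \<and> set cs \<subseteq> {1..t}}"
  define maximal where "maximal P c \<longleftrightarrow> (case (P, c) of ((lam, mu), (w, cs)) \<Rightarrow>
      eval2 (det (minor fs w cs)) lam mu \<noteq> 0 \<and> \<not> leading_rows_full_rank fs t (w + 1) lam mu)"
    for P :: "'a \<times> 'a" and c
  have "finite candidates"
    by (rule finite_subset[of _ "{..<p} \<times> {cs. set cs \<subseteq> {1..t} \<and> length cs \<le> p}"])
      (auto simp: candidates_def intro!: finite_lists_length_le)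
  moreover have "\<exists>c\<in>candidates. maximal P c" if PD: "P \<in> D" for P
  proof -
    obtain lam mu where P: "P = (lam, mu)" by fastforce
    then obtain m n F G N where "admissible m n F G" "\<forall>i\<in>{1..p}. N i \<in> carrier_mat m n"
      "\<not> solvable fs t p lam mu m n F G N"
      using assms(2) PD by blast
    then obtain w cs where "w < p" "length cs = w" "set cs \<subseteq> {1..t}"
      "eval2 (det (minor fs w cs)) lam mu \<noteq> 0" "\<not> leading_rows_full_rank fs t (w + 1) lam mu"
      by (rule maximal_minor_if_unsolvable)
    then show ?thesis
      unfolding P by (intro bexI[of _ "(w, cs)"]) (simp_all add: candidates_def maximal_def)
  qed
  ultimately obtain c where "c \<in> candidates" "infinite {P\<in>D. maximal P c}"
    using pigeonhole_infinite_rel[OF assms(1)] by blast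
  moreover obtain w cs where "c = (w, cs)" by fastforce
  ultimately have c: "(w, cs) \<in> candidates" and D1: "infinite {P\<in>D. maximal P (w, cs)}"
    by simp_all
  then obtain P where "P \<in> D" "maximal P (w, cs)"
    using not_finite_existsD by blast
  then have "det (minor fs w cs) \<noteq> 0"
    by (cases P) (auto simp: maximal_def)
  then have "distinct cs"
    using c distinct_if_det_minor_nonzero by (auto simp: candidates_def)
  moreover have "\<forall>j\<in>{1..t}. \<forall>(lam, mu)\<in>{P\<in>D. maximal P (w, cs)}.
      eval2 (det (minor fs (w + 1) (cs @ [j]))) lam mu = 0"
    using c by (auto simp: maximal_def leading_rows_full_rank_def candidates_def)
  ultimately show ?thesis
    using that[of "{P\<in>D. maximal P (w, cs)}" w cs] c D1 by (auto simp: candidates_def maximal_def)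
qed

lemma enumerate_complement:
  assumes "distinct cs" "set cs \<subseteq> {1..t}"
  obtains js where "bij_betw js {1..t - length cs} ({1..t} - set cs)" "length cs \<le> t"
proof -
  have "card ({1..t} - set cs) = t - length cs"
    using assms by (simp add: card_Diff_subset distinct_card)
  moreover have "length cs \<le> t"
    using card_mono[OF finite_atLeastAtMost assms(2)] assms(1) by (simp add: distinct_card)
  ultimately show ?thesis
    using ex_bij_betw_nat_finite_1[of "{1..t} - set cs"] that by auto
qed

theorem lemma3p2:
  fixes fs :: "nat \<Rightarrow> nat \<Rightarrow> 'a::alg_closed_field poly poly"
    and p t :: nat
    and D :: "('a \<times> 'a) set"
  assumes "infinite D"
    and "\<forall>(lam, mu)\<in>D. \<exists>m n F G N. admissible m n F G \<and>
           (\<forall>i\<in>{1..p}. N i \<in> carrier_mat m n) \<and>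
           \<not> solvable fs t p lam mu m n F G N"
  shows "\<exists>D' d w js. D' \<subseteq> D \<and> infinite D' \<and>
     (\<forall>(lam, mu)\<in>D'. eval2 d lam mu = 0) \<and>
     w \<le> min (p - 1) t \<and>
     js ` {1..t - w} \<subseteq> {1..t} \<and> inj_on js {1..t - w} \<and>
     (\<forall>(lam, mu)\<in>D'. \<forall>m n F G N.
        admissible m n F G \<and> (\<forall>i\<in>{1..w}. N i \<in> carrier_mat m n) \<longrightarrow>
          solvable fs t w lam mu m n F G N \<and>
          (\<forall>S. (\<forall>a\<in>{1..t - w}. S a \<in> carrier_mat m n) \<longrightarrow>
             (\<exists>X. is_solution fs t w lam mu m n F G N X \<and> (\<forall>a\<in>{1..t - w}. X (js a) = S a)) \<and>
             (\<forall>X Y. is_solution fs t w lam mu m n F G N X \<and> (\<forall>a\<in>{1..t - w}. X (js a) = S a) \<and>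
                    is_solution fs t w lam mu m n F G N Y \<and> (\<forall>a\<in>{1..t - w}. Y (js a) = S a)
                    \<longrightarrow> (\<forall>j\<in>{1..t}. X j = Y j)))) \<and>
     (\<forall>(lam, mu)\<in>D'. \<forall>m n F G X.
        admissible m n F G \<and> is_solution fs t w lam mu m n F G (\<lambda>_. 0\<^sub>m m n) X \<longrightarrow>
          (\<exists>S\<in>carrier_mat m n.
             sys_lhs fs t (w + 1) lam mu m n F G X =
             polyapp (lam \<cdot>\<^sub>m 1\<^sub>m m + F) (mu \<cdot>\<^sub>m 1\<^sub>m n + G) d S))"
proof -
  obtain w cs D1 where D1: "D1 \<subseteq> D" "infinite D1" and w: "w < p"
    and cs: "distinct cs" "length cs = w" "set cs \<subseteq> {1..t}"
    and nonzero: "\<forall>(lam, mu)\<in>D1. eval2 (det (minor fs w cs)) lam mu \<noteq> 0"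
    and bordered: "\<forall>j\<in>{1..t}. \<forall>(lam, mu)\<in>D1. eval2 (det (minor fs (w + 1) (cs @ [j]))) lam mu = 0"
    using common_maximal_minor[OF assms] by metis
  obtain d where d: "\<forall>j\<in>{1..t}. d dvd det (minor fs (w + 1) (cs @ [j]))"
    and infinite_D': "infinite {(lam, mu)\<in>D1. eval2 d lam mu = 0}"
    using common_divisor_vanishing_infinitely[OF finite_atLeastAtMost D1(2) bordered] by blast
  define D' where "D' = {(lam, mu)\<in>D1. eval2 d lam mu = 0}"
  obtain js where js: "bij_betw js {1..t - w} ({1..t} - set cs)" and "w \<le> t"
    using enumerate_complement[OF cs(1,3)] cs(2) by blast
  show ?thesis
    apply (intro exI[of _ D'] exI[of _ d] exI[of _ w] exI[of _ js] conjI)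
    subgoal using D1(1) by (auto simp: D'_def)
    subgoal using infinite_D' by (simp add: D'_def)
    subgoal by (auto simp: D'_def)
    subgoal using w \<open>w \<le> t\<close> by simp
    subgoal using bij_betw_imp_surj_on[OF js] by auto
    subgoal using bij_betw_imp_inj_on[OF js] .
    subgoal unfolding D'_def
      by (clarify, rule solutions_parametrized_by_free_unknowns[OF _ cs(2,3) _ js])
        (use nonzero in auto)
    subgoal unfolding D'_def
      by (clarify, rule next_equation_through_divisor[OF _ cs(2,3) _ d]) (use nonzero in auto)
    done
qed

end
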